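(* Let $M \in \mathbb N$, $\mathcal A \subset \{0,\dots,M-1\}$, $\chi \in C_c^\infty((0,1);[0,1])$, and let $N = KM$ with $K \in \mathbb N$. Let $\varphi, \psi : [0,1] \to [0,1]$ satisfy $$d\big(\operatorname{supp}\psi, \Phi^{-1}(\operatorname{supp}\varphi)\big) \ge r$$ for some $r$ with $0 < Mr \le 2 d(\operatorname{supp}\chi, 0)$. Then $$\|\varphi_N B_N \psi_N\|_{\ell^2_N \to \ell^2_N} \le \tilde g_\chi(Nr), \qquad \|\psi_N^{\mathcal F} B_N \varphi_N^{\mathcal F}\|_{\ell^2_N \to \ell^2_N} \le \tilde g_\chi(Nr),$$ where $\tilde g_\chi:(0,\infty)\to[0,\infty)$ is a function satisfying: for every $n$ there is $C_n>0$ with $\tilde g_\chi(x) \le C_n x^{-n}$, and if $\chi \in \mathcal G^s_c((0,1))$ for some $s > 1$ then $\tilde g_\chi(x) \le C e^{-c x^{1/s}}$ for some $C, c > 0$; the constants $C_n, C, c$ depend only on $\chi$.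
   Context: For $N \in \mathbb N$, $\mathbb Z_N \simeq \{0,\dots,N-1\}$, $\ell^2_N = \ell^2(\mathbb Z_N)$, and $\mathcal F_N u(j) = N^{-1/2}\sum_{\ell=0}^{N-1} e^{-2\pi i j\ell/N} u(\ell)$. For a function $\varphi$ on $[0,1]$, $\varphi_N(j) = \varphi(j/N)$, viewed as a multiplication operator on $\ell^2_N$, and $\varphi_N^{\mathcal F} = \mathcal F_N^* \varphi_N \mathcal F_N$. For $N = KM$ and $a \in \{0,\dots,M-1\}$, $\Pi_a:\ell^2_N\to\ell^2_K$, $\Pi_a u(j) = u(j+aK)$, and the quantum open baker's map is $B_N = \sum_{a \in \mathcal A} \mathcal F_N^*\Pi_a^* \chi_K \mathcal F_K \chi_K \Pi_a$ with $\chi_K$ multiplication by $j\mapsto\chi(j/K)$. Distances on $[0,1]$ are taken with $0$ and $1$ identified: $d(x,y) = \min\{|x-y|,1-|x-y|\}$, $d(U,V) = \inf_{x\in U, y \in V} d(x,y)$. The expanding map $\Phi : \bigsqcup_{a\in\mathcal A}(a/M,(a+1)/M) \to (0,1)$ is $\Phi(x) = Mx - a$ for $x \in (a/M,(a+1)/M)$, and $\Phi^{-1}(S)$ denotes preimage. $\mathcal G^s_c((0,1))$ ($s>1$) is the set of $f\in C_c^\infty(\mathbb R)$, $\operatorname{supp} f\subset(0,1)$, such that for every compact $K'$ there is $C_{K',f}$ with $\sup_{K'}|\partial^\alpha f| \le C_{K',f}^{\alpha+1}(\alpha!)^s$ for all $\alpha \ge 0$. *)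

theory Defs
  imports "HOL-Analysis.Analysis"
begin

text \<open>Vectors in l2(Z_N) are represented as functions nat => complex, only the
values at indices 0..N-1 being relevant; operators are maps on such functions.\<close>

definition l2norm :: "nat \<Rightarrow> (nat \<Rightarrow> complex) \<Rightarrow> real" where
  "l2norm N u = sqrt (\<Sum>j<N. (cmod (u j))\<^sup>2)"

definition opnorm :: "nat \<Rightarrow> ((nat \<Rightarrow> complex) \<Rightarrow> (nat \<Rightarrow> complex)) \<Rightarrow> real" where
  "opnorm N T = Sup ((\<lambda>u. l2norm N (T u)) ` {u. l2norm N u \<le> 1})"

definition DFT :: "nat \<Rightarrow> (nat \<Rightarrow> complex) \<Rightarrow> (nat \<Rightarrow> complex)" where
  "DFT N u = (\<lambda>j. (1 / sqrt (real N)) *\<^sub>R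
      (\<Sum>l<N. exp (- 2 * pi * \<i> * of_nat j * of_nat l / of_nat N) * u l))"

definition DFT_adj :: "nat \<Rightarrow> (nat \<Rightarrow> complex) \<Rightarrow> (nat \<Rightarrow> complex)" where
  "DFT_adj N u = (\<lambda>j. (1 / sqrt (real N)) *\<^sub>R
      (\<Sum>l<N. exp (2 * pi * \<i> * of_nat j * of_nat l / of_nat N) * u l))"

definition mult_op :: "nat \<Rightarrow> (real \<Rightarrow> real) \<Rightarrow> (nat \<Rightarrow> complex) \<Rightarrow> (nat \<Rightarrow> complex)" where
  "mult_op N \<phi> u = (\<lambda>j. complex_of_real (\<phi> (real j / real N)) * u j)"

definition fourier_mult_op :: "nat \<Rightarrow> (real \<Rightarrow> real) \<Rightarrow> (nat \<Rightarrow> complex) \<Rightarrow> (nat \<Rightarrow> complex)" where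
  "fourier_mult_op N \<phi> = DFT_adj N \<circ> mult_op N \<phi> \<circ> DFT N"

definition Pi_op :: "nat \<Rightarrow> nat \<Rightarrow> (nat \<Rightarrow> complex) \<Rightarrow> (nat \<Rightarrow> complex)" where
  "Pi_op K a u = (\<lambda>j. u (j + a * K))"

definition Pi_adj :: "nat \<Rightarrow> nat \<Rightarrow> (nat \<Rightarrow> complex) \<Rightarrow> (nat \<Rightarrow> complex)" where
  "Pi_adj K a v = (\<lambda>j. if a * K \<le> j \<and> j < (a + 1) * K then v (j - a * K) else 0)"

definition baker :: "nat \<Rightarrow> nat \<Rightarrow> nat set \<Rightarrow> (real \<Rightarrow> real) \<Rightarrow> (nat \<Rightarrow> complex) \<Rightarrow> (nat \<Rightarrow> complex)" where
  "baker M K A chi u = (\<lambda>j. \<Sum>a\<in>A.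
      DFT_adj (K * M) (Pi_adj K a (mult_op K chi (DFT K (mult_op K chi (Pi_op K a u))))) j)"

text \<open>Distance on [0,1] with 0 and 1 identified, and distance between sets
(infimum, with inf of the empty set = +infinity).\<close>
definition circ_dist :: "real \<Rightarrow> real \<Rightarrow> real" where
  "circ_dist x y = min \<bar>x - y\<bar> (1 - \<bar>x - y\<bar>)"

definition circ_setdist :: "real set \<Rightarrow> real set \<Rightarrow> ereal" where
  "circ_setdist U V = (INF x\<in>U. INF y\<in>V. ereal (circ_dist x y))"

definition supp01 :: "(real \<Rightarrow> real) \<Rightarrow> real set" where
  "supp01 f = closure {x \<in> {0..1}. f x \<noteq> 0}"

definition supp :: "(real \<Rightarrow> real) \<Rightarrow> real set" where
  "supp f = closure {x. f x \<noteq> 0}"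

definition Phi_preimage :: "nat \<Rightarrow> nat set \<Rightarrow> real set \<Rightarrow> real set" where
  "Phi_preimage M A S = {x. \<exists>a\<in>A. real a / real M < x \<and> x < (real a + 1) / real M
                              \<and> real M * x - real a \<in> S}"

definition smooth :: "(real \<Rightarrow> real) \<Rightarrow> bool" where
  "smooth f \<longleftrightarrow> (\<forall>k x. ((deriv ^^ k) f) differentiable (at x))"

definition cutoff :: "(real \<Rightarrow> real) \<Rightarrow> bool" where
  "cutoff chi \<longleftrightarrow> smooth chi \<and> compact (supp chi) \<and> supp chi \<subseteq> {0<..<1}
                 \<and> (\<forall>x. 0 \<le> chi x \<and> chi x \<le> 1)"

definition gevrey_c :: "real \<Rightarrow> (real \<Rightarrow> real) \<Rightarrow> bool" where
  "gevrey_c s f \<longleftrightarrow> smooth f \<and> compact (supp f) \<and> supp f \<subseteq> {0<..<1} \<and>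
     (\<forall>K'. compact K' \<longrightarrow> (\<exists>C. \<forall>\<alpha>::nat. \<forall>x\<in>K'.
         \<bar>(deriv ^^ \<alpha>) f x\<bar> \<le> C ^ (\<alpha> + 1) * (fact \<alpha>) powr s))"

end

theory Submission
  imports Defs
begin

(* The matrix of phi_N B_N psi_N, and after removing the unitary F_N also that of
   psi_N^F B_N phi_N^F, consists of bounded weights times the cutoff sums
   S(t) = sum_{j<K} chi(j/K) e(j t), e(t) = exp(2 pi i t), taken at t = y - u with y = n/N
   and u = m/K.  Whenever such an entry is nonzero, the separation hypotheses give
   d(y, u) >= M r / 2.  Summing by parts p times turns (1 - e(t))^p S(t) into a sum of p-th
   differences of samples of chi, and |1 - e(t)| >= 2 d(t, 0), so
   |S(t)| <= K (1 + p) sup|chi^(p)| / (2 K d(t, 0))^p.  After a discrete Fourier transform in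
   the block index a, Schur's test bounds both operators by lattice sums of these kernel
   bounds, which are O((N r)^(1 - p)) for every p >= 2, and g is the minimum of all these
   bounds.  For chi in the Gevrey class, sup|chi^(p)| <= C^(p+1) (p!)^s, and taking p of
   order (N r)^(1/s) gives exp(-c (N r)^(1/s)). *)

section \<open>Discrete Fourier analysis and Schur's test\<close>

definition e2pi :: "real \<Rightarrow> complex" where
  "e2pi t = exp (2 * pi * \<i> * complex_of_real t)"

lemma e2pi_add: "e2pi (a + b) = e2pi a * e2pi b"
  by (simp add: e2pi_def distrib_left exp_add)

lemma e2pi_of_nat_mult: "e2pi (real n * t) = e2pi t ^ n"
  unfolding e2pi_def by (metis exp_of_nat_mult mult.left_commute of_real_mult of_real_of_nat_eq)

lemma e2pi_of_int: "e2pi (real_of_int k) = 1"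
proof -
  have "e2pi (real_of_int k) = exp (\<i> * (complex_of_int k * (complex_of_real pi * 2)))"
    unfolding e2pi_def by (simp add: algebra_simps)
  also have "\<dots> = 1" by (rule exp_2pi_1_int)
  finally show ?thesis .
qed

lemma e2pi_of_nat: "e2pi (real k) = 1"
  using e2pi_of_int[of "int k"] by simp

lemma e2pi_eq_1_iff: "e2pi t = 1 \<longleftrightarrow> t \<in> \<int>"
proof
  assume "e2pi t = 1"
  then obtain n :: int where "2 * pi * t = real_of_int (2 * n) * pi"
    unfolding e2pi_def exp_eq_1 by auto
  then have "t = of_int n" by simp
  then show "t \<in> \<int>" by simp
next
  assume "t \<in> \<int>" then show "e2pi t = 1" by (metis Ints_cases e2pi_of_int)
qed

lemma norm_e2pi [simp]: "cmod (e2pi t) = 1"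
proof -
  have "2 * pi * \<i> * complex_of_real t = \<i> * complex_of_real (2 * pi * t)" by simp
  then show ?thesis unfolding e2pi_def by (simp only: norm_exp_i_times)
qed

lemma cnj_e2pi: "cnj (e2pi t) = e2pi (- t)"
  unfolding e2pi_def by (simp add: exp_cnj)

lemma sum_e2pi_geometric:
  fixes N :: nat and d :: int
  assumes "N \<ge> 1" "\<bar>d\<bar> < int N"
  shows "(\<Sum>j<N. e2pi (real j * real_of_int d / real N)) = (if d = 0 then of_nat N else 0)"
proof (cases "d = 0")
  case True then show ?thesis by (simp add: e2pi_def)
next
  case False
  let ?w = "e2pi (real_of_int d / real N)"
  have eq: "e2pi (real j * real_of_int d / real N) = ?w ^ j" for j
    using e2pi_of_nat_mult[of j "real_of_int d / real N"] by simp
  have "?w \<noteq> 1"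
  proof
    assume "?w = 1"
    then have "real_of_int d / real N \<in> \<int>" by (simp add: e2pi_eq_1_iff)
    then obtain k :: int where k: "real_of_int d / real N = of_int k" by (auto elim: Ints_cases)
    then have "real_of_int d = of_int k * real N" using assms by (simp add: field_simps)
    then have "d = k * int N" by (metis of_int_eq_iff of_int_mult of_int_of_nat_eq)
    with False have "k \<noteq> 0" by auto
    then have "\<bar>k\<bar> * int N \<ge> 1 * int N" by (intro mult_right_mono) auto
    moreover have "\<bar>d\<bar> = \<bar>k\<bar> * int N" using \<open>d = k * int N\<close> by (simp add: abs_mult)
    ultimately show False using assms by linarith
  qed
  moreover have "?w ^ N = 1"
    using e2pi_of_nat_mult[of N "real_of_int d / real N"] assms e2pi_of_int[of d] by simp
  ultimately show ?thesis using False by (simp add: eq sum_gp_strict)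
qed

lemma sum_e2pi_orthogonal:
  assumes "N \<ge> 1" "l < N" "l' < N"
  shows "(\<Sum>j<N. e2pi (real j * (real l - real l') / real N)) = (if l = l' then of_nat N else 0)"
proof -
  have "\<bar>int l - int l'\<bar> < int N" using assms by auto
  from sum_e2pi_geometric[OF assms(1) this] show ?thesis by simp
qed

lemma parseval_e2pi:
  fixes c :: "nat \<Rightarrow> complex"
  assumes "N \<ge> 1"
  shows "(\<Sum>j<N. (cmod (\<Sum>l<N. e2pi (real j * real l / real N) * c l))\<^sup>2) = real N * (\<Sum>l<N. (cmod (c l))\<^sup>2)"
proof -
  have "complex_of_real (\<Sum>j<N. (cmod (\<Sum>l<N. e2pi (real j * real l / real N) * c l))\<^sup>2)
      = (\<Sum>j<N. (\<Sum>l<N. e2pi (real j * real l / real N) * c l) * cnj (\<Sum>l'<N. e2pi (real j * real l' / real N) * c l'))"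
    by (simp only: of_real_sum complex_norm_square)
  also have "\<dots> = (\<Sum>j<N. \<Sum>l<N. \<Sum>l'<N. e2pi (real j * (real l - real l') / real N) * (c l * cnj (c l')))"
  proof (rule sum.cong[OF refl])
    fix j
    have e: "e2pi (real j * real l / real N) * cnj (e2pi (real j * real l' / real N)) = e2pi (real j * (real l - real l') / real N)" for l l'
      by (simp add: cnj_e2pi e2pi_add[symmetric] right_diff_distrib diff_divide_distrib)
    show "(\<Sum>l<N. e2pi (real j * real l / real N) * c l) * cnj (\<Sum>l'<N. e2pi (real j * real l' / real N) * c l') =
          (\<Sum>l<N. \<Sum>l'<N. e2pi (real j * (real l - real l') / real N) * (c l * cnj (c l')))"
      unfolding cnj_sum sum_product
      by (intro sum.cong refl) (subst e[symmetric], simp add: ac_simps)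
  qed
  also have "\<dots> = (\<Sum>l<N. \<Sum>l'<N. \<Sum>j<N. e2pi (real j * (real l - real l') / real N) * (c l * cnj (c l')))"
    by (subst sum.swap) (rule sum.cong[OF refl], rule sum.swap)
  also have "\<dots> = (\<Sum>l<N. \<Sum>l'<N. (\<Sum>j<N. e2pi (real j * (real l - real l') / real N)) * (c l * cnj (c l')))"
    by (simp only: sum_distrib_right)
  also have "\<dots> = (\<Sum>l<N. \<Sum>l'<N. (if l = l' then of_nat N * (c l * cnj (c l')) else 0))"
    using assms by (intro sum.cong refl) (simp add: sum_e2pi_orthogonal)
  also have "\<dots> = (\<Sum>l<N. of_nat N * (c l * cnj (c l)))"
    by (intro sum.cong refl) (simp add: sum.delta)
  also have "\<dots> = complex_of_real (real N * (\<Sum>l<N. (cmod (c l))\<^sup>2))"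
    by (simp only: of_real_mult of_real_sum of_real_of_nat_eq complex_norm_square sum_distrib_left)
  finally show ?thesis by (simp only: of_real_eq_iff)
qed

lemma DFT_e2pi: "DFT N u j = complex_of_real (1 / sqrt (real N)) * (\<Sum>l<N. e2pi (- (real j * real l / real N)) * u l)"
  unfolding DFT_def e2pi_def scaleR_conv_of_real
  by (intro arg_cong2[where f="(*)"] refl sum.cong) (simp_all add: field_simps)

lemma DFT_adj_e2pi: "DFT_adj N u j = complex_of_real (1 / sqrt (real N)) * (\<Sum>l<N. e2pi (real j * real l / real N) * u l)"
  unfolding DFT_adj_def e2pi_def scaleR_conv_of_real
  by (intro arg_cong2[where f="(*)"] refl sum.cong) (simp_all add: field_simps)

lemma sum_sq_DFT_adj:
  assumes "N \<ge> 1"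
  shows "(\<Sum>j<N. (cmod (DFT_adj N u j))\<^sup>2) = (\<Sum>j<N. (cmod (u j))\<^sup>2)"
proof -
  have "(\<Sum>j<N. (cmod (DFT_adj N u j))\<^sup>2) = (\<Sum>j<N. (1 / real N) * (cmod (\<Sum>l<N. e2pi (real j * real l / real N) * u l))\<^sup>2)"
    using assms by (intro sum.cong refl) (simp add: DFT_adj_e2pi norm_divide power_divide)
  also have "\<dots> = (1 / real N) * (real N * (\<Sum>l<N. (cmod (u l))\<^sup>2))"
    by (simp only: sum_distrib_left[symmetric] parseval_e2pi[OF assms])
  finally show ?thesis using assms by simp
qed

lemma sum_sq_DFT:
  assumes "N \<ge> 1"
  shows "(\<Sum>j<N. (cmod (DFT N u j))\<^sup>2) = (\<Sum>j<N. (cmod (u j))\<^sup>2)"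
proof -
  have e: "cmod (\<Sum>l<N. e2pi (- (real j * real l / real N)) * u l) = cmod (\<Sum>l<N. e2pi (real j * real l / real N) * cnj (u l))" for j
  proof -
    have "(\<Sum>l<N. e2pi (- (real j * real l / real N)) * u l) = cnj (\<Sum>l<N. e2pi (real j * real l / real N) * cnj (u l))"
      by (simp add: cnj_e2pi)
    then show ?thesis by (metis complex_mod_cnj)
  qed
  have "(\<Sum>j<N. (cmod (DFT N u j))\<^sup>2) = (\<Sum>j<N. (1 / real N) * (cmod (\<Sum>l<N. e2pi (real j * real l / real N) * cnj (u l)))\<^sup>2)"
    using assms by (intro sum.cong refl) (simp add: DFT_e2pi norm_divide power_divide e)
  also have "\<dots> = (1 / real N) * (real N * (\<Sum>l<N. (cmod (cnj (u l)))\<^sup>2))"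
    by (simp only: sum_distrib_left[symmetric] parseval_e2pi[OF assms])
  finally show ?thesis using assms by simp
qed

lemma DFT_DFT_adj:
  assumes "N \<ge> 1" "j < N"
  shows "DFT N (DFT_adj N v) j = v j"
proof -
  have "DFT N (DFT_adj N v) j = complex_of_real (1 / real N) *
        (\<Sum>l<N. \<Sum>m<N. e2pi (real l * (real m - real j) / real N) * v m)"
  proof -
    have e: "e2pi (- (real j * real l / real N)) * e2pi (real l * real m / real N) = e2pi (real l * (real m - real j) / real N)" for l m
      by (simp add: e2pi_add[symmetric] algebra_simps diff_divide_distrib)
    have "DFT N (DFT_adj N v) j = complex_of_real (1 / sqrt (real N)) * complex_of_real (1 / sqrt (real N)) *
        (\<Sum>l<N. \<Sum>m<N. e2pi (- (real j * real l / real N)) * (e2pi (real l * real m / real N) * v m))"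
      by (simp add: DFT_e2pi DFT_adj_e2pi sum_distrib_left mult_ac)
    also have "complex_of_real (1 / sqrt (real N)) * complex_of_real (1 / sqrt (real N)) = complex_of_real (1 / real N)"
      using assms by (simp flip: of_real_mult)
    finally show ?thesis by (simp add: mult.assoc[symmetric] e)
  qed
  also have "\<dots> = complex_of_real (1 / real N) * (\<Sum>m<N. (\<Sum>l<N. e2pi (real l * (real m - real j) / real N)) * v m)"
    by (subst sum.swap) (simp only: sum_distrib_right)
  also have "\<dots> = complex_of_real (1 / real N) * (\<Sum>m<N. (if m = j then of_nat N * v m else 0))"
    using assms by (intro arg_cong2[where f="(*)"] refl sum.cong) (simp_all add: sum_e2pi_orthogonal)
  also have "\<dots> = v j" using assms by (simp add: sum.delta)
  finally show ?thesis .
qed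

lemma opnorm_le_if_sum_sq_le:
  assumes "Q \<ge> 0" "\<And>u. (\<Sum>j<N. (cmod (T u j))\<^sup>2) \<le> Q\<^sup>2 * (\<Sum>j<N. (cmod (u j))\<^sup>2)"
  shows "opnorm N T \<le> Q"
  unfolding opnorm_def
proof (rule cSup_least)
  show "(\<lambda>u. l2norm N (T u)) ` {u. l2norm N u \<le> 1} \<noteq> {}"
  proof -
    have "(\<lambda>_. 0) \<in> {u. l2norm N u \<le> 1}" by (simp add: l2norm_def)
    then show ?thesis by blast
  qed
next
  fix x assume "x \<in> (\<lambda>u. l2norm N (T u)) ` {u. l2norm N u \<le> 1}"
  then obtain u where u: "l2norm N u \<le> 1" "x = l2norm N (T u)" by auto
  have "x = sqrt (\<Sum>j<N. (cmod (T u j))\<^sup>2)" using u by (simp add: l2norm_def)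
  also have "\<dots> \<le> sqrt (Q\<^sup>2 * (\<Sum>j<N. (cmod (u j))\<^sup>2))" using assms(2) by simp
  also have "\<dots> = Q * l2norm N u" using assms(1) by (simp add: l2norm_def real_sqrt_mult)
  also have "\<dots> \<le> Q" using u assms(1) by (simp add: mult_left_le)
  finally show "x \<le> Q" .
qed

lemma sum_lessThan_mult_blocks:
  fixes f :: "nat \<Rightarrow> 'a::comm_monoid_add"
  shows "(\<Sum>i<K * M. f i) = (\<Sum>a<M. \<Sum>j<K. f (j + a * K))"
proof -
  have "(\<Sum>i<M * K. f i) = (\<Sum>a<M. sum f {a * K..<a * K + K})"
    by (rule sum.nat_group[symmetric])
  also have "\<dots> = (\<Sum>a<M. \<Sum>j<K. f (j + a * K))"
  proof (rule sum.cong[OF refl])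
    fix a
    have "sum f {0 + a * K..<K + a * K} = (\<Sum>j = 0..<K. f (j + a * K))"
      by (rule sum.shift_bounds_nat_ivl)
    then show "sum f {a * K..<a * K + K} = (\<Sum>j<K. f (j + a * K))"
      by (simp add: add.commute atLeast0LessThan)
  qed
  finally show ?thesis by (simp add: mult.commute)
qed

lemma sum_lessThan_mult_residues:
  fixes f :: "nat \<Rightarrow> 'a::comm_monoid_add"
  shows "(\<Sum>n<K * M. f n) = (\<Sum>s<M. \<Sum>n'<K. f (M * n' + s))"
proof -
  have "(\<Sum>n<M * K. f n) = (\<Sum>n'<K. \<Sum>s<M. f (s + n' * M))" by (rule sum_lessThan_mult_blocks)
  also have "\<dots> = (\<Sum>s<M. \<Sum>n'<K. f (M * n' + s))"
    by (subst sum.swap) (simp add: add.commute mult.commute)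
  finally show ?thesis by (simp add: mult.commute)
qed

lemma weighted_Cauchy_Schwarz:
  fixes w x :: "'a \<Rightarrow> real"
  assumes "\<And>i. 0 \<le> w i"
  shows "(\<Sum>i\<in>I. w i * x i)\<^sup>2 \<le> (\<Sum>i\<in>I. w i) * (\<Sum>i\<in>I. w i * (x i)\<^sup>2)"
proof -
  have "(\<Sum>i\<in>I. sqrt (w i) * (sqrt (w i) * x i))\<^sup>2 \<le> (\<Sum>i\<in>I. (sqrt (w i))\<^sup>2) * (\<Sum>i\<in>I. (sqrt (w i) * x i)\<^sup>2)"
    by (rule Cauchy_Schwarz_ineq_sum)
  moreover have "sqrt (w i) * (sqrt (w i) * x i) = w i * x i" for i using assms[of i]
    by (simp add: mult.assoc[symmetric])
  moreover have "(sqrt (w i))\<^sup>2 = w i" for i using assms[of i] by simp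
  moreover have "(sqrt (w i) * x i)\<^sup>2 = w i * (x i)\<^sup>2" for i using assms[of i] by (simp add: power_mult_distrib)
  ultimately show ?thesis by simp
qed

lemma schur_test:
  fixes a :: "nat \<Rightarrow> nat \<Rightarrow> complex" and v :: "nat \<Rightarrow> complex"
  assumes row: "\<And>i. i < I \<Longrightarrow> (\<Sum>j<J. cmod (a i j)) \<le> \<alpha>"
    and col: "\<And>j. j < J \<Longrightarrow> (\<Sum>i<I. cmod (a i j)) \<le> \<beta>"
    and \<alpha>: "\<alpha> \<ge> 0"
  shows "(\<Sum>i<I. (cmod (\<Sum>j<J. a i j * v j))\<^sup>2) \<le> \<alpha> * \<beta> * (\<Sum>j<J. (cmod (v j))\<^sup>2)"
proof -
  have "(\<Sum>i<I. (cmod (\<Sum>j<J. a i j * v j))\<^sup>2) \<le> (\<Sum>i<I. \<alpha> * (\<Sum>j<J. cmod (a i j) * (cmod (v j))\<^sup>2))"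
  proof (rule sum_mono)
    fix i assume i: "i \<in> {..<I}"
    have "cmod (\<Sum>j<J. a i j * v j) \<le> (\<Sum>j<J. cmod (a i j) * cmod (v j))"
      by (rule order_trans[OF norm_sum]) (simp add: norm_mult)
    then have "(cmod (\<Sum>j<J. a i j * v j))\<^sup>2 \<le> (\<Sum>j<J. cmod (a i j) * cmod (v j))\<^sup>2"
      by (intro power_mono) auto
    also have "\<dots> \<le> (\<Sum>j<J. cmod (a i j)) * (\<Sum>j<J. cmod (a i j) * (cmod (v j))\<^sup>2)"
      by (rule weighted_Cauchy_Schwarz) simp
    also have "\<dots> \<le> \<alpha> * (\<Sum>j<J. cmod (a i j) * (cmod (v j))\<^sup>2)"
      using row i by (intro mult_right_mono sum_nonneg) auto
    finally show "(cmod (\<Sum>j<J. a i j * v j))\<^sup>2 \<le> \<alpha> * (\<Sum>j<J. cmod (a i j) * (cmod (v j))\<^sup>2)" .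
  qed
  also have "\<dots> = \<alpha> * (\<Sum>j<J. (\<Sum>i<I. cmod (a i j)) * (cmod (v j))\<^sup>2)"
    by (simp add: sum_distrib_left[symmetric] sum_distrib_right sum.swap[of _ "{..<I}"])
  also have "\<dots> \<le> \<alpha> * (\<Sum>j<J. \<beta> * (cmod (v j))\<^sup>2)"
    using col by (intro mult_left_mono[OF _ \<alpha>] sum_mono mult_right_mono) auto
  also have "\<dots> = \<alpha> * \<beta> * (\<Sum>j<J. (cmod (v j))\<^sup>2)" by (simp add: sum_distrib_left mult.assoc)
  finally show ?thesis .
qed

section \<open>Summation by parts and cutoff sums\<close>

definition backward_diff :: "real \<Rightarrow> (real \<Rightarrow> real) \<Rightarrow> real \<Rightarrow> real" where
  "backward_diff h G = (\<lambda>x. G x - G (x - h))"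

definition seq_backward_diff :: "(nat \<Rightarrow> complex) \<Rightarrow> nat \<Rightarrow> complex" where
  "seq_backward_diff f = (\<lambda>m. f m - (if m = 0 then 0 else f (m - 1)))"

lemma summation_by_parts_step:
  fixes z :: complex
  assumes "\<forall>m\<ge>L. g m = 0"
  shows "(1 - z) * (\<Sum>m<L. g m * z ^ m) = (\<Sum>m<Suc L. seq_backward_diff g m * z ^ m)"
proof -
  have a: "(\<Sum>m<Suc L. g m * z ^ m) = (\<Sum>m<L. g m * z ^ m)" using assms by simp
  have b: "(\<Sum>m<Suc L. (if m = 0 then 0 else g (m - 1)) * z ^ m) = z * (\<Sum>m<L. g m * z ^ m)"
    by (subst sum.lessThan_Suc_shift) (simp add: sum_distrib_left mult_ac)
  have "(\<Sum>m<Suc L. seq_backward_diff g m * z ^ m) = (\<Sum>m<Suc L. g m * z ^ m) - (\<Sum>m<Suc L. (if m = 0 then 0 else g (m - 1)) * z ^ m)"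
    unfolding seq_backward_diff_def by (simp add: left_diff_distrib sum_subtractf)
  also have "\<dots> = (1 - z) * (\<Sum>m<L. g m * z ^ m)" by (simp only: a b) (simp add: left_diff_distrib)
  finally show ?thesis ..
qed

lemma seq_backward_diff_vanish: "\<forall>m\<ge>L. g m = 0 \<Longrightarrow> \<forall>m\<ge>Suc L. seq_backward_diff g m = 0"
  unfolding seq_backward_diff_def by auto

lemma summation_by_parts:
  fixes z :: complex
  assumes "\<forall>m\<ge>K. f m = 0"
  shows "(1 - z) ^ p * (\<Sum>m<K. f m * z ^ m) = (\<Sum>m<K + p. (seq_backward_diff ^^ p) f m * z ^ m) \<and> (\<forall>m\<ge>K + p. (seq_backward_diff ^^ p) f m = 0)"
proof (induction p)
  case 0 then show ?case using assms by simp
next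
  case (Suc p)
  then have v: "\<forall>m\<ge>K + p. (seq_backward_diff ^^ p) f m = 0" and e: "(1 - z) ^ p * (\<Sum>m<K. f m * z ^ m) = (\<Sum>m<K + p. (seq_backward_diff ^^ p) f m * z ^ m)" by auto
  have "(1 - z) ^ Suc p * (\<Sum>m<K. f m * z ^ m) = (1 - z) * (\<Sum>m<K + p. (seq_backward_diff ^^ p) f m * z ^ m)"
    by (simp add: e[symmetric] mult.assoc)
  also have "\<dots> = (\<Sum>m<Suc (K + p). seq_backward_diff ((seq_backward_diff ^^ p) f) m * z ^ m)" by (rule summation_by_parts_step[OF v])
  finally show ?case using seq_backward_diff_vanish[OF v] by simp
qed

lemma seq_backward_diff_samples:
  assumes "h > 0" "\<And>x. x < 0 \<Longrightarrow> G x = 0"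
  shows "(seq_backward_diff ^^ p) (\<lambda>m. complex_of_real (G (real m * h))) m = complex_of_real ((backward_diff h ^^ p) G (real m * h))
         \<and> (\<forall>x<0. (backward_diff h ^^ p) G x = 0)"
proof (induction p arbitrary: m)
  case 0 then show ?case using assms by simp
next
  case (Suc p)
  have v: "\<forall>x<0. (backward_diff h ^^ p) G x = 0" using Suc by blast
  have e: "(seq_backward_diff ^^ p) (\<lambda>m. complex_of_real (G (real m * h))) k = complex_of_real ((backward_diff h ^^ p) G (real k * h))" for k
    using Suc by blast
  have step: "(seq_backward_diff ^^ Suc p) (\<lambda>m. complex_of_real (G (real m * h))) m = complex_of_real ((backward_diff h ^^ Suc p) G (real m * h))"
  proof (cases "m = 0")
    case True
    then show ?thesis using v assms(1) by (simp add: seq_backward_diff_def backward_diff_def e)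
  next
    case False
    then have "real (m - 1) * h = real m * h - h" by (simp add: of_nat_diff algebra_simps)
    then show ?thesis using False by (simp add: seq_backward_diff_def backward_diff_def e)
  qed
  have vanish: "\<forall>x<0. (backward_diff h ^^ Suc p) G x = 0" using v assms(1) by (simp add: backward_diff_def)
  show ?case using step vanish by blast
qed

lemma deriv_backward_diff:
  assumes "\<And>x. F differentiable (at x)"
  shows "deriv (backward_diff h F) = backward_diff h (deriv F)"
    and "\<And>x. backward_diff h F differentiable (at x)"
proof -
  have d: "DERIV F x :> deriv F x" for x using assms DERIV_deriv_iff_real_differentiable by blast
  have d2: "DERIV (\<lambda>x. F (x + (- h))) x :> deriv F (x - h)" for x
    using d[of "x - h"] DERIV_shift[of F "deriv F (x - h)" x "- h"] by simp
  have dd: "DERIV (backward_diff h F) x :> deriv F x - deriv F (x - h)" for x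
    unfolding backward_diff_def using DERIV_diff[OF d d2[of x]] by simp
  show "deriv (backward_diff h F) = backward_diff h (deriv F)"
  proof (rule ext)
    fix x
    have "deriv (backward_diff h F) x = deriv F x - deriv F (x - h)" by (rule DERIV_imp_deriv[OF dd])
    then show "deriv (backward_diff h F) x = backward_diff h (deriv F) x" by (simp add: backward_diff_def)
  qed
  show "backward_diff h F differentiable (at x)" for x
    using dd real_differentiable_def by blast
qed

lemma higher_deriv_backward_diff:
  assumes "smooth G"
  shows "(deriv ^^ k) (backward_diff h G) = backward_diff h ((deriv ^^ k) G)"
proof (induction k)
  case 0 then show ?case by simp
next
  case (Suc k)
  have "\<And>x. (deriv ^^ k) G differentiable (at x)" using assms unfolding smooth_def by blast
  then show ?case using Suc by (simp add: deriv_backward_diff(1))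
qed

lemma smooth_backward_diff: "smooth G \<Longrightarrow> smooth (backward_diff h G)"
  unfolding smooth_def
  by (metis higher_deriv_backward_diff deriv_backward_diff(2) smooth_def)

lemma abs_diff_le_mvt:
  fixes F :: "real \<Rightarrow> real"
  assumes "\<And>x. F differentiable (at x)" "\<And>x. \<bar>deriv F x\<bar> \<le> B" "h \<ge> 0"
  shows "\<bar>F x - F (x - h)\<bar> \<le> h * B"
proof (cases "h = 0")
  case True then show ?thesis by simp
next
  case False
  then have "x - h < x" using assms(3) by simp
  moreover have "\<And>y. DERIV F y :> deriv F y" using assms(1) DERIV_deriv_iff_real_differentiable by blast
  ultimately obtain z where "F x - F (x - h) = (x - (x - h)) * deriv F z"
    using MVT2[of "x - h" x F "deriv F"] by blast
  then have "\<bar>F x - F (x - h)\<bar> = h * \<bar>deriv F z\<bar>" using assms(3) by (simp add: abs_mult)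
  also have "\<dots> \<le> h * B" using assms(2,3) by (simp add: mult_left_mono)
  finally show ?thesis .
qed

lemma abs_iterated_backward_diff_le:
  assumes "smooth G" "\<And>x. \<bar>(deriv ^^ p) G x\<bar> \<le> B" "h \<ge> 0"
  shows "\<bar>(backward_diff h ^^ p) G x\<bar> \<le> h ^ p * B"
  using assms(1,2)
proof (induction p arbitrary: G B x)
  case 0 then show ?case by simp
next
  case (Suc p)
  have sm: "smooth (backward_diff h G)" using smooth_backward_diff[OF Suc.prems(1)] .
  have dif: "\<And>x. (deriv ^^ p) G differentiable (at x)" using Suc.prems(1) unfolding smooth_def by blast
  have bd: "\<bar>(deriv ^^ p) (backward_diff h G) y\<bar> \<le> h * B" for y
  proof -
    have "(deriv ^^ p) (backward_diff h G) y = (deriv ^^ p) G y - (deriv ^^ p) G (y - h)"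
      using higher_deriv_backward_diff[OF Suc.prems(1), of p h] by (simp add: backward_diff_def)
    also have "\<bar>\<dots>\<bar> \<le> h * B"
      by (rule abs_diff_le_mvt[OF dif _ assms(3)]) (use Suc.prems(2) in simp)
    finally show ?thesis .
  qed
  have "\<bar>(backward_diff h ^^ p) (backward_diff h G) x\<bar> \<le> h ^ p * (h * B)" by (rule Suc.IH[OF sm bd])
  then show ?case by (simp add: funpow_Suc_right mult_ac del: funpow.simps)
qed

lemma cutoff_nonzero_in_unit:
  assumes "cutoff chi" "chi x \<noteq> 0" shows "0 < x \<and> x < 1"
proof -
  have "x \<in> supp chi" unfolding supp_def using assms(2) by (intro subsetD[OF closure_subset]) simp
  then show ?thesis using assms(1) unfolding cutoff_def by auto
qed

lemma cutoff_imp_smooth: "cutoff chi \<Longrightarrow> smooth chi"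
  unfolding cutoff_def smooth_def by (elim conjE) assumption

lemma higher_deriv_eq_0_on_open:
  assumes "open U" "\<And>y. y \<in> U \<Longrightarrow> F y = 0" "y \<in> U"
  shows "(deriv ^^ p) F y = (0::real)"
  using assms(3)
proof (induction p arbitrary: y)
  case 0 then show ?case using assms(2) by simp
next
  case (Suc p)
  have "((\<lambda>_. 0::real) has_field_derivative 0) (at y)" by simp
  then have "((deriv ^^ p) F has_field_derivative 0) (at y)"
    by (rule has_field_derivative_transform_within_open[OF _ assms(1) Suc.prems]) (use Suc.IH in simp)
  then show ?case by (simp add: DERIV_imp_deriv)
qed

lemma higher_deriv_cutoff_outside_supp:
  assumes "cutoff chi" "x \<notin> supp chi"
  shows "(deriv ^^ p) chi x = 0"
proof (rule higher_deriv_eq_0_on_open[of "- supp chi"])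
  show "open (- supp chi)" unfolding supp_def by auto
  show "x \<in> - supp chi" using assms by auto
  fix y assume y: "y \<in> - supp chi"
  show "chi y = 0"
  proof (rule ccontr)
    assume "chi y \<noteq> 0"
    then have "y \<in> supp chi" unfolding supp_def by (intro subsetD[OF closure_subset]) simp
    with \<open>y \<in> - supp chi\<close> show False by simp
  qed
qed

definition deriv_bound :: "(real \<Rightarrow> real) \<Rightarrow> nat \<Rightarrow> real" where
  "deriv_bound chi p = Sup ((\<lambda>x. \<bar>(deriv ^^ p) chi x\<bar>) ` {0..1})"

lemma deriv_bound_bdd:
  assumes "cutoff chi"
  shows "bdd_above ((\<lambda>x. \<bar>(deriv ^^ p) chi x\<bar>) ` {0..1})"
proof -
  have "continuous_on {0..1} ((deriv ^^ p) chi)"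
    using cutoff_imp_smooth[OF assms] unfolding smooth_def
    by (intro differentiable_imp_continuous_on) (auto simp: differentiable_on_def intro: differentiable_at_withinI)
  then have "compact ((deriv ^^ p) chi ` {0..1})" by (rule compact_continuous_image) simp
  then have "bounded ((deriv ^^ p) chi ` {0..1})" by (rule compact_imp_bounded)
  then obtain B where "\<forall>y\<in>(deriv ^^ p) chi ` {0..1}. norm y \<le> B" by (auto simp: bounded_iff)
  then show ?thesis by (intro bdd_aboveI[of _ B]) auto
qed

lemma abs_higher_deriv_le_deriv_bound:
  assumes "cutoff chi"
  shows "\<bar>(deriv ^^ p) chi x\<bar> \<le> deriv_bound chi p"
proof (cases "x \<in> {0..1}")
  case True
  then show ?thesis unfolding deriv_bound_def by (intro cSup_upper deriv_bound_bdd[OF assms]) auto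
next
  case False
  then have "x \<notin> supp chi" using assms unfolding cutoff_def by auto
  then have "(deriv ^^ p) chi x = 0" by (rule higher_deriv_cutoff_outside_supp[OF assms])
  moreover have "\<bar>(deriv ^^ p) chi 0\<bar> \<le> deriv_bound chi p"
    unfolding deriv_bound_def by (intro cSup_upper deriv_bound_bdd[OF assms]) auto
  ultimately show ?thesis by simp
qed

lemma deriv_bound_nonneg: "cutoff chi \<Longrightarrow> 0 \<le> deriv_bound chi p"
  using abs_higher_deriv_le_deriv_bound[of chi p 0] by linarith

definition cutoff_sum :: "(real \<Rightarrow> real) \<Rightarrow> nat \<Rightarrow> real \<Rightarrow> complex" where
  "cutoff_sum chi K t = (\<Sum>j<K. complex_of_real (chi (real j / real K)) * e2pi (real j * t))"

lemma norm_one_minus_e2pi_pow_cutoff_sum_le: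
  assumes "cutoff chi" "K \<ge> 1"
  shows "cmod (1 - e2pi t) ^ p * cmod (cutoff_sum chi K t) \<le> real (K + p) * (1 / real K) ^ p * deriv_bound chi p"
proof -
  define f where "f m = complex_of_real (chi (real m * (1 / real K)))" for m
  have fz: "\<forall>m\<ge>K. f m = 0"
  proof (intro allI impI)
    fix m assume "K \<le> m"
    then have "real m * (1 / real K) \<ge> 1" using assms(2) by (simp add: field_simps)
    then show "f m = 0" unfolding f_def using cutoff_nonzero_in_unit[OF assms(1)] by fastforce
  qed
  have S: "cutoff_sum chi K t = (\<Sum>m<K. f m * e2pi t ^ m)"
    unfolding cutoff_sum_def f_def by (simp add: e2pi_of_nat_mult)
  have h: "(1 / real K) > 0" using assms(2) by simp
  have G0: "\<And>x. x < 0 \<Longrightarrow> chi x = 0" using cutoff_nonzero_in_unit[OF assms(1)] by fastforce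
  have "cmod (1 - e2pi t) ^ p * cmod (cutoff_sum chi K t) = cmod ((1 - e2pi t) ^ p * (\<Sum>m<K. f m * e2pi t ^ m))"
    by (simp add: S norm_mult norm_power)
  also have "\<dots> = cmod (\<Sum>m<K + p. (seq_backward_diff ^^ p) f m * e2pi t ^ m)"
    using summation_by_parts[OF fz, of "e2pi t" p] by simp
  also have "\<dots> \<le> (\<Sum>m<K + p. cmod ((seq_backward_diff ^^ p) f m * e2pi t ^ m))" by (rule norm_sum)
  also have "\<dots> \<le> (\<Sum>m<K + p. (1 / real K) ^ p * deriv_bound chi p)"
  proof (rule sum_mono)
    fix m
    have "(seq_backward_diff ^^ p) f m = complex_of_real ((backward_diff (1 / real K) ^^ p) chi (real m * (1 / real K)))"
      unfolding f_def using seq_backward_diff_samples[where G=chi and h="1/real K", OF h G0] by blast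
    moreover have "\<bar>(backward_diff (1 / real K) ^^ p) chi (real m * (1 / real K))\<bar> \<le> (1 / real K) ^ p * deriv_bound chi p"
      by (rule abs_iterated_backward_diff_le[OF cutoff_imp_smooth[OF assms(1)] abs_higher_deriv_le_deriv_bound[OF assms(1)]]) (use h in simp)
    ultimately show "cmod ((seq_backward_diff ^^ p) f m * e2pi t ^ m) \<le> (1 / real K) ^ p * deriv_bound chi p"
      by (simp add: norm_mult norm_power)
  qed
  also have "\<dots> = real (K + p) * (1 / real K) ^ p * deriv_bound chi p" by simp
  finally show ?thesis .
qed

lemma sin_ge_half:
  fixes x :: real
  assumes "0 \<le> x" "x \<le> 8 / 5"
  shows "x / 2 \<le> sin x"
proof -
  have "\<bar>sin x - (\<Sum>m<3. sin_coeff m * x ^ m)\<bar> \<le> inverse (fact 3) * \<bar>x\<bar> ^ 3"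
    by (rule Maclaurin_sin_bound)
  moreover have "(\<Sum>m<3. sin_coeff m * x ^ m) = x"
    by (simp add: numeral_3_eq_3 sin_coeff_def)
  ultimately have "\<bar>sin x - x\<bar> \<le> x ^ 3 / 6" using assms by (simp add: fact_numeral)
  then have "sin x \<ge> x - x ^ 3 / 6" using abs_le_D2[of "sin x - x" "x^3/6"] by linarith
  moreover have "x ^ 3 \<le> 3 * x"
  proof -
    have "x * x \<le> (8/5) * (8/5)" using assms by (intro mult_mono) auto
    then have "x * x \<le> 3" by simp
    then have "x * x * x \<le> 3 * x" using assms by (simp add: mult_right_mono)
    then show ?thesis by (simp add: power3_eq_cube)
  qed
  ultimately show ?thesis by linarith
qed

lemma circ_dist_le_abs_sin:
  assumes "\<bar>v\<bar> \<le> 1"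
  shows "min \<bar>v\<bar> (1 - \<bar>v\<bar>) \<le> \<bar>sin (pi * v)\<bar>"
proof -
  define w where "w = \<bar>v\<bar>"
  define m where "m = min w (1 - w)"
  have w: "0 \<le> w" "w \<le> 1" using assms by (auto simp: w_def)
  have sw: "\<bar>sin (pi * v)\<bar> = \<bar>sin (pi * w)\<bar>"
    unfolding w_def by (cases "v \<ge> 0") (auto simp: abs_if)
  have sm: "sin (pi * w) = sin (pi * m)"
  proof (cases "w \<le> 1 - w")
    case True then show ?thesis by (simp add: m_def)
  next
    case False
    then have "m = 1 - w" by (simp add: m_def)
    then have "pi * m = pi - pi * w" by (simp add: right_diff_distrib)
    then show ?thesis by (simp add: sin_pi_minus)
  qed
  have m: "0 \<le> m" "m \<le> 1 / 2" using w by (auto simp: m_def min_def)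
  have "pi * m \<le> pi * (1 / 2)" using m by (intro mult_left_mono) auto
  moreover have "pi \<le> 16 / 5" using pi_approx(2) by simp
  ultimately have "pi * m \<le> 8 / 5" by linarith
  then have "pi * m / 2 \<le> sin (pi * m)" using m by (intro sin_ge_half) auto
  moreover have "2 * m \<le> pi * m" using m pi_ge_two by (intro mult_right_mono) auto
  then have "m \<le> pi * m / 2" by linarith
  ultimately have "m \<le> sin (pi * m)" by linarith
  then have "m \<le> \<bar>sin (pi * m)\<bar>" by (meson abs_ge_self order_trans)
  then show ?thesis using sw sm unfolding m_def w_def by simp
qed

lemma circ_dist_le_norm_one_minus_e2pi:
  assumes "y \<in> {0..1}" "u \<in> {0..1}"
  shows "2 * circ_dist y u \<le> cmod (1 - e2pi (y - u))"
proof -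
  have "cmod (1 - e2pi (y - u)) = cmod (exp (\<i> * complex_of_real (2 * pi * (y - u))) - 1)"
    unfolding e2pi_def by (simp add: norm_minus_commute mult_ac)
  also have "\<dots> = 2 * \<bar>sin (2 * pi * (y - u) / 2)\<bar>" by (rule dist_exp_i_1)
  also have "2 * pi * (y - u) / 2 = pi * (y - u)" by simp
  finally have e: "cmod (1 - e2pi (y - u)) = 2 * \<bar>sin (pi * (y - u))\<bar>" .
  have "\<bar>y - u\<bar> \<le> 1" using assms by auto
  from circ_dist_le_abs_sin[OF this] show ?thesis unfolding e circ_dist_def by simp
qed

section \<open>Separation\<close>

lemma circ_setdist_le:
  assumes "x \<in> U" "y \<in> V"
  shows "circ_setdist U V \<le> ereal (circ_dist x y)"
  unfolding circ_setdist_def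
  by (rule INF_lower2[OF assms(1)], rule INF_lower[OF assms(2)])

lemma cutoff_margin:
  assumes ch: "cutoff chi" and hchi: "ereal (real M * r) \<le> 2 * circ_setdist (supp chi) {0}"
    and u: "chi u \<noteq> 0"
  shows "real M * r \<le> 2 * min u (1 - u)"
proof -
  have u01: "0 < u" "u < 1" using cutoff_nonzero_in_unit[OF ch u] by auto
  have "u \<in> supp chi" unfolding supp_def using u by (intro subsetD[OF closure_subset]) simp
  then have "circ_setdist (supp chi) {0} \<le> ereal (circ_dist u 0)" by (rule circ_setdist_le) simp
  then have "2 * circ_setdist (supp chi) {0} \<le> ereal (2 * circ_dist u 0)"
    using ereal_mult_left_mono[of "circ_setdist (supp chi) {0}" "ereal (circ_dist u 0)" 2] by simp
  with hchi have "ereal (real M * r) \<le> ereal (2 * circ_dist u 0)" by (rule order_trans)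
  then show ?thesis using u01 by (simp add: circ_dist_def)
qed

lemma expanding_map_separation:
  assumes M: "M \<ge> 1"
    and hsep: "circ_setdist (supp01 \<psi>) (Phi_preimage M A (supp01 \<phi>)) \<ge> ereal r"
    and a: "a \<in> A" "a < M" and y: "0 < y" "y < 1" "\<phi> y \<noteq> 0"
    and u: "0 \<le> u" "u \<le> 1" "\<psi> ((u + real a) / real M) \<noteq> 0"
  shows "real M * r \<le> \<bar>u - y\<bar>"
proof -
  have Mpos: "real M > 0" using M by simp
  define x where "x = (u + real a) / real M"
  define x' where "x' = (y + real a) / real M"
  have "y \<in> supp01 \<phi>" unfolding supp01_def using y by (intro subsetD[OF closure_subset]) simp
  moreover have "real a / real M < x'" "x' < (real a + 1) / real M" "real M * x' - real a = y"
    using y Mpos by (auto simp: x'_def field_simps)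
  ultimately have "x' \<in> Phi_preimage M A (supp01 \<phi>)" unfolding Phi_preimage_def using a by auto
  moreover have "x \<in> supp01 \<psi>"
  proof -
    have "u + real a \<le> real M" using u a by linarith
    then have "x \<in> {0..1}" using u Mpos by (simp add: x_def)
    then show ?thesis unfolding supp01_def using u by (intro subsetD[OF closure_subset]) (simp add: x_def)
  qed
  ultimately have "circ_setdist (supp01 \<psi>) (Phi_preimage M A (supp01 \<phi>)) \<le> ereal (circ_dist x x')"
    by (intro circ_setdist_le)
  from order_trans[OF hsep this] have "r \<le> circ_dist x x'" by simp
  moreover have "x - x' = (u - y) / real M" using Mpos by (simp add: x_def x'_def field_simps)
  ultimately have "r \<le> \<bar>u - y\<bar> / real M" unfolding circ_dist_def by (simp add: abs_divide)
  then show ?thesis using Mpos by (simp add: field_simps)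
qed

lemma circ_dist_ge_of_separated:
  assumes M: "M \<ge> 1" and r: "r > 0" and ch: "cutoff chi"
    and hchi: "ereal (real M * r) \<le> 2 * circ_setdist (supp chi) {0}"
    and hsep: "circ_setdist (supp01 \<psi>) (Phi_preimage M A (supp01 \<phi>)) \<ge> ereal r"
    and a: "a \<in> A" "a < M" and y: "0 \<le> y" "y < 1" "\<phi> y \<noteq> 0"
    and u: "chi u \<noteq> 0" "\<psi> ((u + real a) / real M) \<noteq> 0"
  shows "real M * r / 2 \<le> circ_dist y u"
proof -
  have margin: "real M * r \<le> 2 * min u (1 - u)" by (rule cutoff_margin[OF ch hchi u(1)])
  have u01: "0 < u" "u < 1" using cutoff_nonzero_in_unit[OF ch u(1)] by auto
  show ?thesis
  proof (cases "y = 0")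
    case True
    then show ?thesis using margin u01 by (auto simp: circ_dist_def min_def)
  next
    case False
    with y have "real M * r \<le> \<bar>u - y\<bar>"
      using u01 by (intro expanding_map_separation[OF M hsep a _ _ _ _ _ u(2)]) auto
    moreover have "min u (1 - u) \<le> 1 - \<bar>y - u\<bar>" using u01 y by (auto simp: abs_if min_def)
    moreover have "0 < real M * r" using r M by simp
    ultimately show ?thesis using margin unfolding circ_dist_def by (auto simp: abs_minus_commute)
  qed
qed

section \<open>Lattice sums\<close>

definition inv_pow_above :: "real \<Rightarrow> nat \<Rightarrow> real \<Rightarrow> real" where
  "inv_pow_above R p x = (if R \<le> x then 1 / x ^ p else 0)"

lemma inv_pow_above_nonneg: "0 \<le> R \<Longrightarrow> 0 \<le> inv_pow_above R p x"
  unfolding inv_pow_above_def by (cases "R \<le> x") auto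

lemma sum_telescoping_above:
  assumes "R > 0" "\<theta> \<ge> 0"
  shows "(\<Sum>k<K. (if R \<le> real k + \<theta> then 1 / (real k + \<theta>) - 1 / (real k + \<theta> + 1) else 0))
         \<le> 1 / R - 1 / max R (real K + \<theta>)"
proof (induction K)
  case 0
  have "1 / max R \<theta> \<le> 1 / R" using assms by (intro divide_left_mono) auto
  then show ?case by simp
next
  case (Suc K)
  show ?case
  proof (cases "R \<le> real K + \<theta>")
    case True
    then have "max R (real K + \<theta>) = real K + \<theta>" "max R (real (Suc K) + \<theta>) = real K + \<theta> + 1" by auto
    then show ?thesis using Suc True by (simp add: add_ac)
  next
    case False
    then have "max R (real K + \<theta>) = R" by simp
    moreover have "1 / max R (real (Suc K) + \<theta>) \<le> 1 / R" using assms by (intro divide_left_mono) auto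
    ultimately show ?thesis using Suc False by simp
  qed
qed

lemma inv_pow_above_le_telescoping:
  assumes "R > 0" "p \<ge> 2"
  shows "inv_pow_above R p x \<le> (1 + R) / R ^ (p - 1) * (if R \<le> x then 1 / x - 1 / (x + 1) else 0)"
proof (cases "R \<le> x")
  case False then show ?thesis by (simp add: inv_pow_above_def)
next
  case True
  then have x: "x > 0" using assms by simp
  obtain q where q: "p = q + 2" using assms(2) by (metis add.commute le_Suc_ex)
  have Rq: "R ^ q \<le> x ^ q" using True assms by (intro power_mono) auto
  have a: "R * (x * (x + 1)) \<le> (1 + R) * (x * x)"
  proof -
    have "R * x \<le> x * x" using True x by (intro mult_right_mono) auto
    then show ?thesis by (simp add: algebra_simps)
  qed
  have "R ^ (q + 1) * (x * (x + 1)) = R ^ q * (R * (x * (x + 1)))" by simp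
  also have "\<dots> \<le> x ^ q * ((1 + R) * (x * x))"
    by (rule mult_mono[OF Rq a]) (use assms x in auto)
  also have "\<dots> = (1 + R) * x ^ p" by (simp add: q power_add power2_eq_square mult_ac)
  finally have ineq: "R ^ (q + 1) * (x * (x + 1)) \<le> (1 + R) * x ^ p" .
  have "1 / x - 1 / (x + 1) = 1 / (x * (x + 1))" using x by (simp add: field_simps)
  moreover have "1 / x ^ p \<le> (1 + R) / R ^ (q + 1) * (1 / (x * (x + 1)))"
  proof -
    have "1 / x ^ p = (1 + R) / ((1 + R) * x ^ p)" using assms by simp
    also have "\<dots> \<le> (1 + R) / (R ^ (q + 1) * (x * (x + 1)))"
      by (rule frac_le) (use ineq x assms in auto)
    also have "\<dots> = (1 + R) / R ^ (q + 1) * (1 / (x * (x + 1)))" by simp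
    finally show ?thesis .
  qed
  ultimately show ?thesis using True q by (simp add: inv_pow_above_def)
qed

lemma sum_inv_pow_above_lattice_le:
  assumes "R > 0" "p \<ge> 2" "\<theta> \<ge> 0"
  shows "(\<Sum>k<K. inv_pow_above R p (real k + \<theta>)) \<le> (1 + R) / R ^ p"
proof -
  have c: "(1 + R) / R ^ (p - 1) \<ge> 0" using assms by simp
  have "(\<Sum>k<K. inv_pow_above R p (real k + \<theta>)) \<le> (\<Sum>k<K. (1 + R) / R ^ (p - 1) * (if R \<le> real k + \<theta> then 1 / (real k + \<theta>) - 1 / (real k + \<theta> + 1) else 0))"
    using inv_pow_above_le_telescoping[OF assms(1,2)] by (intro sum_mono) (simp add: add.assoc)
  also have "\<dots> = (1 + R) / R ^ (p - 1) * (\<Sum>k<K. (if R \<le> real k + \<theta> then 1 / (real k + \<theta>) - 1 / (real k + \<theta> + 1) else 0))"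
    by (simp add: sum_distrib_left)
  also have "\<dots> \<le> (1 + R) / R ^ (p - 1) * (1 / R)"
  proof (rule mult_left_mono[OF _ c])
    have "1 / max R (real K + \<theta>) \<ge> 0" using assms by simp
    then show "(\<Sum>k<K. (if R \<le> real k + \<theta> then 1 / (real k + \<theta>) - 1 / (real k + \<theta> + 1) else 0)) \<le> 1 / R"
      using sum_telescoping_above[OF assms(1,3), of K] by linarith
  qed
  also have "\<dots> = (1 + R) / R ^ p"
  proof -
    have "R ^ p = R ^ (p - 1) * R" using assms(2) by (metis One_nat_def Suc_pred le_numeral_extra(2) less_le_trans not_less_eq_eq pos2 power_Suc2 zero_less_Suc)
    then show ?thesis by simp
  qed
  finally show ?thesis .
qed

lemma sum_min_inv_sq_lattice_le:
  assumes "0 \<le> \<theta>" "\<theta> \<le> 1"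
  shows "(\<Sum>k<K. min 1 (1 / (real k + \<theta>) ^ 2)) \<le> 3"
proof -
  have "(\<Sum>k<K. min 1 (1 / (real k + \<theta>) ^ 2)) \<le> (\<Sum>k<K. (if k = 0 then 1 else 0) + inv_pow_above 1 2 (real k + \<theta>))"
  proof (rule sum_mono)
    fix k
    show "min 1 (1 / (real k + \<theta>) ^ 2) \<le> (if k = 0 then 1 else 0) + inv_pow_above 1 2 (real k + \<theta>)"
    proof (cases "k = 0")
      case True then show ?thesis by (simp add: inv_pow_above_def)
    next
      case False then have "1 \<le> real k + \<theta>" using assms by simp
      then show ?thesis using False by (simp add: inv_pow_above_def)
    qed
  qed
  also have "\<dots> = (\<Sum>k<K. (if k = 0 then 1 else 0)) + (\<Sum>k<K. inv_pow_above 1 2 (real k + \<theta>))"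
    by (rule sum.distrib)
  also have "(\<Sum>k<K. (if k = 0 then 1 else 0)) \<le> (1::real)" by (simp add: sum.delta)
  also have "(\<Sum>k<K. inv_pow_above 1 2 (real k + \<theta>)) \<le> 2" using sum_inv_pow_above_lattice_le[of 1 2 \<theta> K] assms by simp
  finally show ?thesis by simp
qed

lemma sum_two_sided_le:
  fixes H :: "real \<Rightarrow> real"
  assumes H: "\<And>x. 0 \<le> H x"
  shows "(\<Sum>k<K. H (min (real k + \<theta>) (real K - real k - \<theta>)))
          \<le> (\<Sum>k<K. H (real k + \<theta>)) + (\<Sum>k<K. H (real k + (1 - \<theta>)))"
proof -
  have min_le: "H (min a b) \<le> H a + H b" for a b
    using H[of a] H[of b] by (cases "a \<le> b") (auto simp: min_def)
  have "(\<Sum>k<K. H (min (real k + \<theta>) (real K - real k - \<theta>))) \<le> (\<Sum>k<K. H (real k + \<theta>) + H (real K - real k - \<theta>))"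
    by (intro sum_mono min_le)
  also have "\<dots> = (\<Sum>k<K. H (real k + \<theta>)) + (\<Sum>k<K. H (real K - real k - \<theta>))" by (rule sum.distrib)
  also have "(\<Sum>k<K. H (real K - real k - \<theta>)) = (\<Sum>k<K. H (real k + (1 - \<theta>)))"
  proof -
    have "(\<Sum>k<K. H (real k + (1 - \<theta>))) = (\<Sum>i<K. H (real (K - Suc i) + (1 - \<theta>)))"
      by (rule sum.nat_diff_reindex[symmetric])
    also have "\<dots> = (\<Sum>i<K. H (real K - real i - \<theta>))"
      by (intro sum.cong refl) (simp add: of_nat_diff algebra_simps)
    finally show ?thesis ..
  qed
  finally show ?thesis by simp
qed

lemma sum_rotate_mod:
  fixes F :: "nat \<Rightarrow> 'a::comm_monoid_add"
  shows "(\<Sum>i<K. F ((c + i) mod K)) = (\<Sum>k<K. F k)"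
proof (induction c)
  case 0 then show ?case by (intro sum.cong refl) simp
next
  case (Suc c)
  show ?case
  proof (cases K)
    case 0 then show ?thesis by simp
  next
    case (Suc K')
    define G where "G i = F ((c + i) mod K)" for i
    have "(\<Sum>i<K. F ((Suc c + i) mod K)) = (\<Sum>i<Suc K'. G (Suc i))" by (simp add: G_def Suc)
    also have "\<dots> = (\<Sum>i<K'. G (Suc i)) + G (Suc K')" by simp
    also have "G (Suc K') = G 0" by (simp add: G_def Suc[symmetric])
    also have "(\<Sum>i<K'. G (Suc i)) + G 0 = (\<Sum>i<Suc K'. G i)" by (simp only: sum.lessThan_Suc_shift add.commute)
    also have "\<dots> = (\<Sum>k<K. F k)" using Suc.IH by (simp add: G_def Suc)
    finally show ?thesis .
  qed
qed

lemma sum_rotate_mod_row: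
  fixes F :: "nat \<Rightarrow> 'a::comm_monoid_add"
  assumes "n' < K"
  shows "(\<Sum>m<K. F ((n' + (K - m)) mod K)) = (\<Sum>k<K. F k)"
proof -
  have "(\<Sum>m<K. F ((n' + (K - m)) mod K)) = (\<Sum>i<K. F ((n' + (K - (K - Suc i))) mod K))"
    by (rule sum.nat_diff_reindex[symmetric])
  also have "\<dots> = (\<Sum>i<K. F ((Suc n' + i) mod K))"
    by (intro sum.cong refl) (simp add: Suc_diff_Suc)
  also have "\<dots> = (\<Sum>k<K. F k)" by (rule sum_rotate_mod)
  finally show ?thesis .
qed

lemma sum_rotate_mod_col:
  fixes F :: "nat \<Rightarrow> 'a::comm_monoid_add"
  shows "(\<Sum>n'<K. F ((n' + (K - m)) mod K)) = (\<Sum>k<K. F k)"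
proof -
  have "(\<Sum>n'<K. F ((n' + (K - m)) mod K)) = (\<Sum>i<K. F ((K - m + i) mod K))" by (simp only: add.commute)
  also have "\<dots> = (\<Sum>k<K. F k)" by (rule sum_rotate_mod)
  finally show ?thesis .
qed

lemma scaled_circ_dist_residue_eq:
  fixes K M n' s m :: nat
  assumes K: "K \<ge> 1" and M: "M \<ge> 1" and s: "s < M" and n': "n' < K" and m: "m < K"
  shows "real K * circ_dist (real (M * n' + s) / real (K * M)) (real m / real K)
       = min (real ((n' + (K - m)) mod K) + real s / real M) (real K - real ((n' + (K - m)) mod K) - real s / real M)"
proof -
  define \<theta> where "\<theta> = real s / real M"
  have th: "0 \<le> \<theta>" "\<theta> < 1" using s M by (auto simp: \<theta>_def)
  have Kp: "real K > 0" using K by simp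
  have yu: "real (M * n' + s) / real (K * M) - real m / real K = (real n' - real m + \<theta>) / real K"
    using K M by (simp add: \<theta>_def field_simps)
  have cd: "real K * circ_dist (real (M * n' + s) / real (K * M)) (real m / real K)
            = min \<bar>real n' - real m + \<theta>\<bar> (real K - \<bar>real n' - real m + \<theta>\<bar>)"
    unfolding circ_dist_def yu using Kp by (simp add: abs_divide min_mult_distrib_left right_diff_distrib)
  show ?thesis
  proof (cases "m \<le> n'")
    case True
    then have "(n' + (K - m)) mod K = n' - m"
    proof -
      have e: "n' + (K - m) = (n' - m) + K" using True m by simp
      have "n' - m < K" using n' by linarith
      then show ?thesis unfolding e by simp
    qed
    moreover have "\<bar>real n' - real m + \<theta>\<bar> = real (n' - m) + \<theta>" using True th by (simp add: of_nat_diff)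
    ultimately show ?thesis using cd by (simp add: \<theta>_def diff_diff_eq)
  next
    case False
    then have k: "(n' + (K - m)) mod K = n' + (K - m)" using m by simp
    have "\<bar>real n' - real m + \<theta>\<bar> = real m - real n' - \<theta>" using False th by simp
    moreover have "real (n' + (K - m)) = real n' + real K - real m" using m by (simp add: of_nat_diff)
    ultimately show ?thesis using cd k by (simp add: \<theta>_def min.commute algebra_simps)
  qed
qed

section \<open>Matrix elements of the open baker's map\<close>

lemma block_index_iff:
  fixes j a b K :: nat
  assumes "j < K"
  shows "(a * K \<le> j + b * K \<and> j + b * K < (a + 1) * K) \<longleftrightarrow> b = a"
proof
  assume h: "a * K \<le> j + b * K \<and> j + b * K < (a + 1) * K"
  have "a * K < (b + 1) * K" using h assms by simp
  then have "a < b + 1" by (rule mult_right_less_imp_less) simp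
  moreover have "b * K < (a + 1) * K" using h by linarith
  then have "b < a + 1" by (rule mult_right_less_imp_less) simp
  ultimately show "b = a" by simp
next
  assume "b = a" then show "a * K \<le> j + b * K \<and> j + b * K < (a + 1) * K" using assms by simp
qed

lemma DFT_adj_Pi_adj_e2pi:
  assumes "a < M"
  shows "DFT_adj (K * M) (Pi_adj K a Y) n
       = complex_of_real (1 / sqrt (real (K * M))) * (\<Sum>j<K. e2pi (real n * real (j + a * K) / real (K * M)) * Y j)"
proof -
  have "(\<Sum>l<K * M. e2pi (real n * real l / real (K * M)) * Pi_adj K a Y l)
      = (\<Sum>b<M. \<Sum>j<K. e2pi (real n * real (j + b * K) / real (K * M)) * Pi_adj K a Y (j + b * K))"
    by (rule sum_lessThan_mult_blocks)
  also have "\<dots> = (\<Sum>b<M. if b = a then (\<Sum>j<K. e2pi (real n * real (j + a * K) / real (K * M)) * Y j) else 0)"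
  proof (rule sum.cong[OF refl])
    fix b
    have "(\<Sum>j<K. e2pi (real n * real (j + b * K) / real (K * M)) * Pi_adj K a Y (j + b * K))
        = (\<Sum>j<K. if b = a then e2pi (real n * real (j + a * K) / real (K * M)) * Y j else 0)"
    proof (intro sum.cong refl)
      fix j assume "j \<in> {..<K}"
      then have j: "j < K" by simp
      have "Pi_adj K a Y (j + b * K) = (if b = a then Y j else 0)"
        unfolding Pi_adj_def using block_index_iff[OF j, of a b] by auto
      then show "e2pi (real n * real (j + b * K) / real (K * M)) * Pi_adj K a Y (j + b * K)
          = (if b = a then e2pi (real n * real (j + a * K) / real (K * M)) * Y j else 0)" by simp
    qed
    then show "(\<Sum>j<K. e2pi (real n * real (j + b * K) / real (K * M)) * Pi_adj K a Y (j + b * K))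
        = (if b = a then (\<Sum>j<K. e2pi (real n * real (j + a * K) / real (K * M)) * Y j) else 0)"
      by simp
  qed
  also have "\<dots> = (\<Sum>j<K. e2pi (real n * real (j + a * K) / real (K * M)) * Y j)"
    using assms by (simp add: sum.delta')
  finally show ?thesis by (simp add: DFT_adj_e2pi)
qed

lemma sum_cutoff_e2pi_eq:
  assumes "K \<ge> 1" "M \<ge> 1"
  shows "(\<Sum>j<K. complex_of_real (chi (real j / real K)) *
            (e2pi (real n * real (j + a * K) / real (K * M)) * e2pi (- (real j * real m / real K))))
       = e2pi (real n * real a / real M) * cutoff_sum chi K (real n / real (K * M) - real m / real K)"
proof -
  have e: "e2pi (real n * real (j + a * K) / real (K * M)) * e2pi (- (real j * real m / real K))
         = e2pi (real n * real a / real M) * e2pi (real j * (real n / real (K * M) - real m / real K))" for j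
  proof -
    have "real n * real (j + a * K) / real (K * M) + - (real j * real m / real K)
        = real n * real a / real M + real j * (real n / real (K * M) - real m / real K)"
      using assms by (simp add: field_simps)
    then show ?thesis by (simp flip: e2pi_add)
  qed
  show ?thesis unfolding cutoff_sum_def sum_distrib_left
    by (intro sum.cong refl) (subst e, rule mult.left_commute)
qed

lemma sum_cutoff_DFT_block_eq:
  assumes "K \<ge> 1" "M \<ge> 1"
  shows "(\<Sum>j<K. e2pi (real n * real (j + a * K) / real (K * M)) *
            (complex_of_real (chi (real j / real K)) * (c2 * (\<Sum>m<K. e2pi (- (real j * real m / real K)) * Z m))))
       = c2 * (\<Sum>m<K. e2pi (real n * real a / real M) * cutoff_sum chi K (real n / real (K * M) - real m / real K) * Z m)"
proof -
  have "(\<Sum>j<K. e2pi (real n * real (j + a * K) / real (K * M)) *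
            (complex_of_real (chi (real j / real K)) * (c2 * (\<Sum>m<K. e2pi (- (real j * real m / real K)) * Z m))))
      = (\<Sum>j<K. c2 * (\<Sum>m<K. complex_of_real (chi (real j / real K)) *
            (e2pi (real n * real (j + a * K) / real (K * M)) * e2pi (- (real j * real m / real K))) * Z m))"
    by (intro sum.cong refl) (simp add: sum_distrib_left mult_ac)
  also have "\<dots> = c2 * (\<Sum>m<K. \<Sum>j<K. complex_of_real (chi (real j / real K)) *
            (e2pi (real n * real (j + a * K) / real (K * M)) * e2pi (- (real j * real m / real K))) * Z m)"
    by (subst sum.swap) (simp only: sum_distrib_left)
  also have "\<dots> = c2 * (\<Sum>m<K. (\<Sum>j<K. complex_of_real (chi (real j / real K)) *
            (e2pi (real n * real (j + a * K) / real (K * M)) * e2pi (- (real j * real m / real K)))) * Z m)"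
    by (simp only: sum_distrib_right)
  also have "\<dots> = c2 * (\<Sum>m<K. e2pi (real n * real a / real M) * cutoff_sum chi K (real n / real (K * M) - real m / real K) * Z m)"
    by (simp only: sum_cutoff_e2pi_eq[OF assms])
  finally show ?thesis .
qed

definition weighted_input :: "(real \<Rightarrow> real) \<Rightarrow> (real \<Rightarrow> real) \<Rightarrow> nat \<Rightarrow> nat \<Rightarrow> (nat \<Rightarrow> complex) \<Rightarrow> nat \<Rightarrow> nat \<Rightarrow> complex" where
  "weighted_input chi \<psi> K M u a m = complex_of_real (chi (real m / real K)) *
      (complex_of_real (\<psi> (real (m + a * K) / real (K * M))) * u (m + a * K))"

lemma phi_baker_psi_eq:
  assumes K: "K \<ge> 1" and M: "M \<ge> 1" and A: "A \<subseteq> {0..<M}"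
  shows "mult_op (K * M) \<phi> (baker M K A chi (mult_op (K * M) \<psi> u)) n
       = complex_of_real (\<phi> (real n / real (K * M))) *
         (complex_of_real (1 / sqrt (real (K * M))) * complex_of_real (1 / sqrt (real K)) *
          (\<Sum>a\<in>A. \<Sum>m<K. e2pi (real n * real a / real M) * cutoff_sum chi K (real n / real (K * M) - real m / real K)
                          * weighted_input chi \<psi> K M u a m))"
proof -
  let ?c1 = "complex_of_real (1 / sqrt (real (K * M)))"
  let ?c2 = "complex_of_real (1 / sqrt (real K))"
  have "baker M K A chi (mult_op (K * M) \<psi> u) n
      = (\<Sum>a\<in>A. ?c1 * (?c2 * (\<Sum>m<K. e2pi (real n * real a / real M) * cutoff_sum chi K (real n / real (K * M) - real m / real K)
                          * weighted_input chi \<psi> K M u a m)))"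
    unfolding baker_def
  proof (rule sum.cong[OF refl])
    fix a assume "a \<in> A"
    then have a: "a < M" using A by auto
    show "DFT_adj (K * M) (Pi_adj K a (mult_op K chi (DFT K (mult_op K chi (Pi_op K a (mult_op (K * M) \<psi> u)))))) n
        = ?c1 * (?c2 * (\<Sum>m<K. e2pi (real n * real a / real M) * cutoff_sum chi K (real n / real (K * M) - real m / real K)
                          * weighted_input chi \<psi> K M u a m))"
      unfolding DFT_adj_Pi_adj_e2pi[OF a]
      unfolding mult_op_def DFT_e2pi Pi_op_def
      by (subst sum_cutoff_DFT_block_eq[OF K M, symmetric]) (simp add: weighted_input_def mult.assoc)
  qed
  then show ?thesis by (simp add: mult_op_def sum_distrib_left mult.assoc)
qed

lemma sum_cutoff_DFT_adj_block_eq: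
  assumes "K \<ge> 1" "M \<ge> 1"
  shows "(\<Sum>m<K. e2pi (- (real j * real m / real K)) * (complex_of_real (chi (real m / real K)) *
            (c * (\<Sum>n<K * M. e2pi (real (m + b * K) * real n / real (K * M)) * F n))))
       = c * (\<Sum>n<K * M. e2pi (real n * real b / real M) * cutoff_sum chi K (real n / real (K * M) - real j / real K) * F n)"
proof -
  have "(\<Sum>m<K. e2pi (- (real j * real m / real K)) * (complex_of_real (chi (real m / real K)) *
            (c * (\<Sum>n<K * M. e2pi (real (m + b * K) * real n / real (K * M)) * F n))))
      = (\<Sum>m<K. c * (\<Sum>n<K * M. complex_of_real (chi (real m / real K)) *
            (e2pi (real n * real (m + b * K) / real (K * M)) * e2pi (- (real m * real j / real K))) * F n))"
    by (intro sum.cong refl) (simp add: sum_distrib_left mult_ac)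
  also have "\<dots> = c * (\<Sum>n<K * M. \<Sum>m<K. complex_of_real (chi (real m / real K)) *
            (e2pi (real n * real (m + b * K) / real (K * M)) * e2pi (- (real m * real j / real K))) * F n)"
    by (subst sum.swap) (simp only: sum_distrib_left)
  also have "\<dots> = c * (\<Sum>n<K * M. (\<Sum>m<K. complex_of_real (chi (real m / real K)) *
            (e2pi (real n * real (m + b * K) / real (K * M)) * e2pi (- (real m * real j / real K)))) * F n)"
    by (simp only: sum_distrib_right)
  also have "\<dots> = c * (\<Sum>n<K * M. e2pi (real n * real b / real M) * cutoff_sum chi K (real n / real (K * M) - real j / real K) * F n)"
    by (simp only: sum_cutoff_e2pi_eq[OF assms])
  finally show ?thesis .
qed

definition baker_inner :: "nat \<Rightarrow> nat \<Rightarrow> nat set \<Rightarrow> (real \<Rightarrow> real) \<Rightarrow> (nat \<Rightarrow> complex) \<Rightarrow> nat \<Rightarrow> complex" where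
  "baker_inner M K A chi v = (\<lambda>i. \<Sum>a\<in>A. Pi_adj K a (mult_op K chi (DFT K (mult_op K chi (Pi_op K a v)))) i)"

lemma baker_eq_DFT_adj_inner: "baker M K A chi v = DFT_adj (K * M) (baker_inner M K A chi v)"
proof (rule ext)
  fix n
  show "baker M K A chi v n = DFT_adj (K * M) (baker_inner M K A chi v) n"
    unfolding baker_def baker_inner_def DFT_adj_def
    by (simp add: scaleR_sum_right sum_distrib_left sum.swap[of _ A])
qed

lemma sum_sq_fourier_baker_eq:
  assumes "K \<ge> 1" "M \<ge> 1"
  shows "(\<Sum>j<K * M. (cmod ((fourier_mult_op (K * M) \<psi> \<circ> baker M K A chi \<circ> fourier_mult_op (K * M) \<phi>) u j))\<^sup>2)
       = (\<Sum>j<K * M. (cmod (mult_op (K * M) \<psi> (baker_inner M K A chi (DFT_adj (K * M) (mult_op (K * M) \<phi> (DFT (K * M) u)))) j))\<^sup>2)"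
proof -
  have N: "K * M \<ge> 1" using assms by simp
  have "(\<Sum>j<K * M. (cmod ((fourier_mult_op (K * M) \<psi> \<circ> baker M K A chi \<circ> fourier_mult_op (K * M) \<phi>) u j))\<^sup>2)
      = (\<Sum>j<K * M. (cmod (mult_op (K * M) \<psi> (DFT (K * M) (baker M K A chi (DFT_adj (K * M) (mult_op (K * M) \<phi> (DFT (K * M) u))))) j))\<^sup>2)"
    unfolding fourier_mult_op_def comp_def by (rule sum_sq_DFT_adj[OF N])
  also have "\<dots> = (\<Sum>j<K * M. (cmod (mult_op (K * M) \<psi> (baker_inner M K A chi (DFT_adj (K * M) (mult_op (K * M) \<phi> (DFT (K * M) u)))) j))\<^sup>2)"
    by (intro sum.cong refl) (simp add: mult_op_def baker_eq_DFT_adj_inner DFT_DFT_adj[OF N])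
  finally show ?thesis .
qed

lemma baker_inner_block:
  assumes "j < K" "finite A"
  shows "baker_inner M K A chi v (j + b * K) = (if b \<in> A then mult_op K chi (DFT K (mult_op K chi (Pi_op K b v))) j else 0)"
proof -
  have "baker_inner M K A chi v (j + b * K) = (\<Sum>a\<in>A. if a = b then mult_op K chi (DFT K (mult_op K chi (Pi_op K a v))) j else 0)"
    unfolding baker_inner_def
  proof (rule sum.cong[OF refl])
    fix a
    show "Pi_adj K a (mult_op K chi (DFT K (mult_op K chi (Pi_op K a v)))) (j + b * K)
        = (if a = b then mult_op K chi (DFT K (mult_op K chi (Pi_op K a v))) j else 0)"
      unfolding Pi_adj_def using block_index_iff[OF assms(1), of a b] by auto
  qed
  also have "\<dots> = (if b \<in> A then mult_op K chi (DFT K (mult_op K chi (Pi_op K b v))) j else 0)"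
    using assms(2) by (simp add: sum.delta)
  finally show ?thesis .
qed

lemma psi_inner_phi_eq:
  assumes K: "K \<ge> 1" and M: "M \<ge> 1" and j: "j < K" and A: "finite A"
  shows "mult_op (K * M) \<psi> (baker_inner M K A chi (DFT_adj (K * M) (mult_op (K * M) \<phi> w))) (j + b * K)
       = (if b \<in> A then complex_of_real (\<psi> (real (j + b * K) / real (K * M))) * complex_of_real (chi (real j / real K)) *
           (complex_of_real (1 / sqrt (real K)) * complex_of_real (1 / sqrt (real (K * M))) *
            (\<Sum>n<K * M. e2pi (real n * real b / real M) * cutoff_sum chi K (real n / real (K * M) - real j / real K)
                 * (complex_of_real (\<phi> (real n / real (K * M))) * w n)))
          else 0)"
proof (cases "b \<in> A")
  case False then show ?thesis by (simp add: mult_op_def baker_inner_block[OF j A])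
next
  case True
  let ?c1 = "complex_of_real (1 / sqrt (real (K * M)))"
  let ?c2 = "complex_of_real (1 / sqrt (real K))"
  have "DFT K (mult_op K chi (Pi_op K b (DFT_adj (K * M) (mult_op (K * M) \<phi> w)))) j
      = ?c2 * (\<Sum>m<K. e2pi (- (real j * real m / real K)) * (complex_of_real (chi (real m / real K)) *
            (?c1 * (\<Sum>n<K * M. e2pi (real (m + b * K) * real n / real (K * M)) * (complex_of_real (\<phi> (real n / real (K * M))) * w n)))))"
    by (simp add: DFT_e2pi DFT_adj_e2pi mult_op_def Pi_op_def)
  also have "\<dots> = ?c2 * (?c1 * (\<Sum>n<K * M. e2pi (real n * real b / real M) * cutoff_sum chi K (real n / real (K * M) - real j / real K)
                 * (complex_of_real (\<phi> (real n / real (K * M))) * w n)))"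
    using sum_cutoff_DFT_adj_block_eq[OF K M, where j=j and c="?c1" and b=b and F="\<lambda>n. complex_of_real (\<phi> (real n / real (K * M))) * w n" and chi=chi] by simp
  finally show ?thesis using True by (simp add: mult_op_def baker_inner_block[OF j A] mult.assoc)
qed

section \<open>Schur bounds for the separated operators\<close>

locale separated_baker =
  fixes M K :: nat and A :: "nat set" and \<phi> \<psi> chi :: "real \<Rightarrow> real" and r :: real
  assumes K: "K \<ge> 1" and M: "M \<ge> 1" and A: "A \<subseteq> {0..<M}"
    and phi: "\<forall>x\<in>{0..1}. 0 \<le> \<phi> x \<and> \<phi> x \<le> 1"
    and psi: "\<forall>x\<in>{0..1}. 0 \<le> \<psi> x \<and> \<psi> x \<le> 1"
    and r: "0 < r"
    and hchi: "ereal (real M * r) \<le> 2 * circ_setdist (supp chi) {0}"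
    and hsep: "circ_setdist (supp01 \<psi>) (Phi_preimage M A (supp01 \<phi>)) \<ge> ereal r"
    and ch: "cutoff chi"
begin

abbreviation "N \<equiv> K * M"

lemma finite_A: "finite A" using A finite_subset by blast

end

text \<open>H is a decay profile for the cutoff sums at the separation scale N r / 2, and L
  bounds its two-sided lattice sums; Schur's test turns this into the bound L for both
  operators of the theorem.\<close>

locale baker_decay_profile = separated_baker +
  fixes H :: "real \<Rightarrow> real" and L :: real
  assumes H_nonneg: "\<And>x. 0 \<le> H x"
    and norm_cutoff_sum_le_H: "\<And>y u. y \<in> {0..1} \<Longrightarrow> u \<in> {0..1} \<Longrightarrow>
          real N * r / 2 \<le> real K * circ_dist y u \<Longrightarrow>
          cmod (cutoff_sum chi K (y - u)) \<le> real K * H (real K * circ_dist y u)"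
    and lattice_sum_le: "\<And>\<theta>. 0 \<le> \<theta> \<Longrightarrow> \<theta> < 1 \<Longrightarrow>
          (\<Sum>k<K. H (min (real k + \<theta>) (real K - real k - \<theta>))) \<le> L"
begin

lemma L_nonneg: "0 \<le> L"
  using sum_nonneg[of "{..<K}" "\<lambda>k. H (min (real k + 0) (real K - real k - 0))"] H_nonneg
    lattice_sum_le[of 0] by simp

definition active :: "nat \<Rightarrow> bool" where
  "active m \<longleftrightarrow> chi (real m / real K) \<noteq> 0 \<and> (\<exists>a\<in>A. \<psi> (real (m + a * K) / real N) \<noteq> 0)"

text \<open>Writing n = M n' + s, the factor e(n a / M) of the matrix of B_N depends on n only
  through the residue s, so the sum over a \<in> A is a discrete Fourier transform on Z_M; what
  remains for each s is the K \<times> K matrix kernel s, whose entry (n', m) vanishes unless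
  y = n / N and u = m / K are separated.\<close>

definition kernel :: "nat \<Rightarrow> nat \<Rightarrow> nat \<Rightarrow> complex" where
  "kernel s n' m = (if \<phi> (real (M * n' + s) / real N) \<noteq> 0 \<and> active m
      then cutoff_sum chi K (real (M * n' + s) / real N - real m / real K) else 0)"

lemma residue_index_less: "s < M \<Longrightarrow> n' < K \<Longrightarrow> M * n' + s < N"
proof -
  assume "s < M" "n' < K"
  then have "M * n' + s < M * n' + M" by simp
  also have "\<dots> = M * (n' + 1)" by simp
  also have "\<dots> \<le> M * K" using \<open>n' < K\<close> by (intro mult_left_mono) auto
  finally show ?thesis by (simp add: mult.commute)
qed

lemma block_index_less: "j < K \<Longrightarrow> b < M \<Longrightarrow> j + b * K < N"
proof -
  assume "j < K" "b < M"
  then have "j + b * K < (b + 1) * K" by simp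
  also have "\<dots> \<le> M * K" using \<open>b < M\<close> by (intro mult_right_mono) auto
  finally show ?thesis by (simp add: mult.commute)
qed

lemma norm_kernel_le:
  assumes s: "s < M" and n': "n' < K" and m: "m < K"
  shows "cmod (kernel s n' m) \<le> real K * H (real K * circ_dist (real (M * n' + s) / real N) (real m / real K))"
proof (cases "\<phi> (real (M * n' + s) / real N) \<noteq> 0 \<and> active m")
  case False
  then have "kernel s n' m = 0" by (auto simp: kernel_def)
  then show ?thesis using H_nonneg K by simp
next
  case True
  define y where "y = real (M * n' + s) / real N"
  define u where "u = real m / real K"
  obtain a where a: "a \<in> A" "\<psi> (real (m + a * K) / real N) \<noteq> 0" and c: "chi u \<noteq> 0"
    using True by (auto simp: active_def u_def)
  have aM: "a < M" using a A by auto
  have "real (M * n' + s) < real N" using residue_index_less[OF s n'] by (simp only: of_nat_less_iff)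
  then have y: "0 \<le> y" "y < 1" using K M by (auto simp: y_def)
  have "(u + real a) / real M = real (m + a * K) / real N" using K M by (simp add: u_def field_simps)
  then have "real M * r / 2 \<le> circ_dist y u"
    using True a c by (intro circ_dist_ge_of_separated[OF M r ch hchi hsep a(1) aM y]) (auto simp: y_def)
  then have "real N * r / 2 \<le> real K * circ_dist y u"
    using K by (simp add: mult_left_mono[of _ _ "real K"] mult.assoc)
  moreover have "y \<in> {0..1}" "u \<in> {0..1}" using y m by (auto simp: u_def)
  ultimately show ?thesis using True norm_cutoff_sum_le_H by (simp add: kernel_def y_def u_def)
qed

lemma norm_kernel_le_lattice:
  assumes s: "s < M" and n': "n' < K" and m: "m < K"
  shows "cmod (kernel s n' m) \<le> real K * H (min (real ((n' + (K - m)) mod K) + real s / real M)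
                                             (real K - real ((n' + (K - m)) mod K) - real s / real M))"
  using norm_kernel_le[OF s n' m] scaled_circ_dist_residue_eq[OF K M s n' m] by simp

lemma kernel_row_sum_le:
  assumes s: "s < M" and n': "n' < K"
  shows "(\<Sum>m<K. cmod (kernel s n' m)) \<le> real K * L"
proof -
  define F where "F k = H (min (real k + real s / real M) (real K - real k - real s / real M))" for k
  have "(\<Sum>m<K. cmod (kernel s n' m)) \<le> (\<Sum>m<K. real K * F ((n' + (K - m)) mod K))"
    using norm_kernel_le_lattice[OF s n'] by (intro sum_mono) (simp add: F_def)
  also have "\<dots> = real K * (\<Sum>k<K. F k)"
    by (simp only: sum_distrib_left[symmetric] sum_rotate_mod_row[OF n'])
  also have "\<dots> \<le> real K * L"
    using lattice_sum_le[of "real s / real M"] s by (intro mult_left_mono) (auto simp: F_def)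
  finally show ?thesis .
qed

lemma kernel_col_sum_le:
  assumes s: "s < M" and m: "m < K"
  shows "(\<Sum>n'<K. cmod (kernel s n' m)) \<le> real K * L"
proof -
  define F where "F k = H (min (real k + real s / real M) (real K - real k - real s / real M))" for k
  have "(\<Sum>n'<K. cmod (kernel s n' m)) \<le> (\<Sum>n'<K. real K * F ((n' + (K - m)) mod K))"
    using norm_kernel_le_lattice[OF s _ m] by (intro sum_mono) (simp add: F_def)
  also have "\<dots> = real K * (\<Sum>k<K. F k)"
    by (simp only: sum_distrib_left[symmetric] sum_rotate_mod_col)
  also have "\<dots> \<le> real K * L"
    using lattice_sum_le[of "real s / real M"] s by (intro mult_left_mono) (auto simp: F_def)
  finally show ?thesis .
qed

definition norm_const :: complex where
  "norm_const = complex_of_real (1 / sqrt (real N)) * complex_of_real (1 / sqrt (real K))"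

lemma norm_const_sq: "(cmod norm_const)\<^sup>2 * (real K * real K * real M) = 1"
proof -
  have "cmod norm_const = \<bar>1 / sqrt (real N)\<bar> * \<bar>1 / sqrt (real K)\<bar>" unfolding norm_const_def norm_mult norm_of_real ..
  then have "(cmod norm_const)\<^sup>2 = (1 / sqrt (real N))\<^sup>2 * (1 / sqrt (real K))\<^sup>2" by (simp only: power_mult_distrib power2_abs)
  also have "\<dots> = 1 / (real K * real M) * (1 / real K)" by (simp add: power_divide)
  finally have "(cmod norm_const)\<^sup>2 = 1 / (real K * real M) * (1 / real K)" .
  then show ?thesis using K M by (simp add: field_simps)
qed

definition folded_input :: "(nat \<Rightarrow> complex) \<Rightarrow> nat \<Rightarrow> nat \<Rightarrow> complex" where
  "folded_input u s m = (\<Sum>a\<in>A. e2pi (real s * real a / real M) * weighted_input chi \<psi> K M u a m)"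

lemma e2pi_residue_shift: "e2pi (real (M * n' + s) * real a / real M) = e2pi (real s * real a / real M)"
proof -
  have "real (M * n' + s) * real a / real M = real (n' * a) + real s * real a / real M"
    using M by (simp add: field_simps)
  then have "e2pi (real (M * n' + s) * real a / real M) = e2pi (real (n' * a)) * e2pi (real s * real a / real M)"
    by (simp only: e2pi_add)
  then show ?thesis by (simp only: e2pi_of_nat mult_1_left)
qed

lemma weighted_input_eq_0: "\<not> active m \<Longrightarrow> a \<in> A \<Longrightarrow> weighted_input chi \<psi> K M u a m = 0"
  unfolding active_def weighted_input_def by auto

lemma norm_phi_baker_psi_le:
  assumes s: "s < M" and n': "n' < K"
  shows "cmod (mult_op N \<phi> (baker M K A chi (mult_op N \<psi> u)) (M * n' + s))
         \<le> cmod norm_const * cmod (\<Sum>m<K. kernel s n' m * folded_input u s m)"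
proof -
  let ?n = "M * n' + s"
  let ?t = "\<lambda>m. real ?n / real N - real m / real K"
  have S1: "(\<Sum>a\<in>A. \<Sum>m<K. e2pi (real ?n * real a / real M) * cutoff_sum chi K (?t m) * weighted_input chi \<psi> K M u a m)
          = (\<Sum>m<K. cutoff_sum chi K (?t m) * folded_input u s m)"
    unfolding folded_input_def e2pi_residue_shift
    by (subst sum.swap) (simp add: sum_distrib_left sum_distrib_right mult_ac)
  have T: "mult_op N \<phi> (baker M K A chi (mult_op N \<psi> u)) ?n
         = complex_of_real (\<phi> (real ?n / real N)) * (norm_const * (\<Sum>m<K. cutoff_sum chi K (?t m) * folded_input u s m))"
    unfolding phi_baker_psi_eq[OF K M A] S1 norm_const_def ..
  show ?thesis
  proof (cases "\<phi> (real ?n / real N) = 0")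
    case True then show ?thesis unfolding T by simp
  next
    case False
    have S2: "(\<Sum>m<K. cutoff_sum chi K (?t m) * folded_input u s m) = (\<Sum>m<K. kernel s n' m * folded_input u s m)"
    proof (intro sum.cong refl)
      fix m
      show "cutoff_sum chi K (?t m) * folded_input u s m = kernel s n' m * folded_input u s m"
      proof (cases "active m")
        case True then show ?thesis using False by (simp add: kernel_def)
      next
        case False
        then have "folded_input u s m = 0" unfolding folded_input_def by (simp add: weighted_input_eq_0)
        then show ?thesis by simp
      qed
    qed
    have lt: "real ?n < real N" using residue_index_less[OF s n'] by (simp only: of_nat_less_iff)
    then have "real ?n / real N \<in> {0..1}" using K M by (auto simp: divide_le_eq_1)
    then have ph: "\<bar>\<phi> (real ?n / real N)\<bar> \<le> 1" using phi by auto
    have "cmod (mult_op N \<phi> (baker M K A chi (mult_op N \<psi> u)) ?n)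
        = \<bar>\<phi> (real ?n / real N)\<bar> * (cmod norm_const * cmod (\<Sum>m<K. kernel s n' m * folded_input u s m))"
      unfolding T S2 by (simp add: norm_mult)
    also have "\<dots> \<le> 1 * (cmod norm_const * cmod (\<Sum>m<K. kernel s n' m * folded_input u s m))"
      by (rule mult_right_mono[OF ph]) simp
    finally show ?thesis by simp
  qed
qed

lemma sum_sq_folded_input_le:
  assumes mK: "m < K"
  shows "(\<Sum>s<M. (cmod (folded_input u s m))\<^sup>2) \<le> real M * (\<Sum>a<M. (cmod (u (m + a * K)))\<^sup>2)"
proof -
  define c where "c a = (if a \<in> A then weighted_input chi \<psi> K M u a m else 0)" for a
  have Wc: "folded_input u s m = (\<Sum>a<M. e2pi (real s * real a / real M) * c a)" for s
  proof -
    have "(\<Sum>a<M. e2pi (real s * real a / real M) * c a) = (\<Sum>a\<in>{..<M} \<inter> A. e2pi (real s * real a / real M) * weighted_input chi \<psi> K M u a m)"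
      unfolding c_def by (simp add: sum.inter_restrict[symmetric] if_distrib cong: if_cong)
    also have "{..<M} \<inter> A = A" using A by auto
    finally show ?thesis unfolding folded_input_def ..
  qed
  have "(\<Sum>s<M. (cmod (folded_input u s m))\<^sup>2) = real M * (\<Sum>a<M. (cmod (c a))\<^sup>2)"
    unfolding Wc by (rule parseval_e2pi[OF M])
  also have "\<dots> \<le> real M * (\<Sum>a<M. (cmod (u (m + a * K)))\<^sup>2)"
  proof (intro mult_left_mono sum_mono)
    fix a assume "a \<in> {..<M}"
    have "cmod (c a) \<le> cmod (u (m + a * K))"
    proof (cases "a \<in> A")
      case False then show ?thesis by (simp add: c_def)
    next
      case True
      have c1: "\<bar>chi (real m / real K)\<bar> \<le> 1" using ch unfolding cutoff_def by (simp add: abs_le_iff)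
      have "m + a * K < N" using block_index_less[OF mK] \<open>a \<in> {..<M}\<close> by simp
      then have "real (m + a * K) < real N" by (simp only: of_nat_less_iff)
      then have "real (m + a * K) / real N \<in> {0..1}" using K M by (auto simp: divide_le_eq_1)
      then have c2: "\<bar>\<psi> (real (m + a * K) / real N)\<bar> \<le> 1" using psi by auto
      have "cmod (c a) = \<bar>chi (real m / real K)\<bar> * (\<bar>\<psi> (real (m + a * K) / real N)\<bar> * cmod (u (m + a * K)))"
        using True by (simp add: c_def weighted_input_def norm_mult)
      also have "\<dots> \<le> 1 * (1 * cmod (u (m + a * K)))"
        by (intro mult_mono c1 c2) auto
      finally show ?thesis by simp
    qed
    then show "(cmod (c a))\<^sup>2 \<le> (cmod (u (m + a * K)))\<^sup>2" by (intro power_mono) auto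
  qed simp
  finally show ?thesis .
qed

lemma sum_sq_phi_baker_psi_le: "(\<Sum>n<N. (cmod (mult_op N \<phi> (baker M K A chi (mult_op N \<psi> u)) n))\<^sup>2) \<le> L\<^sup>2 * (\<Sum>n<N. (cmod (u n))\<^sup>2)"
proof -
  let ?T = "mult_op N \<phi> (baker M K A chi (mult_op N \<psi> u))"
  have KL: "0 \<le> real K * L" using L_nonneg by simp
  have "(\<Sum>n<N. (cmod (?T n))\<^sup>2) = (\<Sum>s<M. \<Sum>n'<K. (cmod (?T (M * n' + s)))\<^sup>2)"
    by (rule sum_lessThan_mult_residues)
  also have "\<dots> \<le> (\<Sum>s<M. \<Sum>n'<K. (cmod norm_const)\<^sup>2 * (cmod (\<Sum>m<K. kernel s n' m * folded_input u s m))\<^sup>2)"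
  proof (intro sum_mono)
    fix s n' assume "s \<in> {..<M}" "n' \<in> {..<K}"
    then have "cmod (?T (M * n' + s)) \<le> cmod norm_const * cmod (\<Sum>m<K. kernel s n' m * folded_input u s m)"
      by (intro norm_phi_baker_psi_le) auto
    then show "(cmod (?T (M * n' + s)))\<^sup>2 \<le> (cmod norm_const)\<^sup>2 * (cmod (\<Sum>m<K. kernel s n' m * folded_input u s m))\<^sup>2"
      by (metis norm_ge_zero power_mono power_mult_distrib)
  qed
  also have "\<dots> = (cmod norm_const)\<^sup>2 * (\<Sum>s<M. \<Sum>n'<K. (cmod (\<Sum>m<K. kernel s n' m * folded_input u s m))\<^sup>2)"
    by (simp add: sum_distrib_left)
  also have "\<dots> \<le> (cmod norm_const)\<^sup>2 * (\<Sum>s<M. (real K * L) * (real K * L) * (\<Sum>m<K. (cmod (folded_input u s m))\<^sup>2))"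
  proof (intro mult_left_mono sum_mono)
    fix s assume "s \<in> {..<M}"
    then have s: "s < M" by simp
    show "(\<Sum>n'<K. (cmod (\<Sum>m<K. kernel s n' m * folded_input u s m))\<^sup>2) \<le> real K * L * (real K * L) * (\<Sum>m<K. (cmod (folded_input u s m))\<^sup>2)"
      by (rule schur_test[OF kernel_row_sum_le[OF s] kernel_col_sum_le[OF s] KL])
  qed simp
  also have "\<dots> = (cmod norm_const)\<^sup>2 * ((real K * L) * (real K * L)) * (\<Sum>m<K. \<Sum>s<M. (cmod (folded_input u s m))\<^sup>2)"
    by (simp add: sum_distrib_left[symmetric] sum.swap[of _ "{..<M}"] mult.assoc)
  also have "\<dots> \<le> (cmod norm_const)\<^sup>2 * ((real K * L) * (real K * L)) * (\<Sum>m<K. real M * (\<Sum>a<M. (cmod (u (m + a * K)))\<^sup>2))"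
    by (intro mult_left_mono sum_mono sum_sq_folded_input_le) auto
  also have "(\<Sum>m<K. real M * (\<Sum>a<M. (cmod (u (m + a * K)))\<^sup>2)) = real M * (\<Sum>n<N. (cmod (u n))\<^sup>2)"
    by (simp add: sum_distrib_left[symmetric] sum_lessThan_mult_blocks sum.swap[of _ "{..<K}"])
  also have "(cmod norm_const)\<^sup>2 * ((real K * L) * (real K * L)) * (real M * (\<Sum>n<N. (cmod (u n))\<^sup>2))
           = ((cmod norm_const)\<^sup>2 * (real K * real K * real M)) * L\<^sup>2 * (\<Sum>n<N. (cmod (u n))\<^sup>2)"
    by (simp add: power2_eq_square mult_ac)
  also have "\<dots> = L\<^sup>2 * (\<Sum>n<N. (cmod (u n))\<^sup>2)" by (simp add: norm_const_sq)
  finally show ?thesis .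
qed

definition weighted_residue :: "(nat \<Rightarrow> complex) \<Rightarrow> nat \<Rightarrow> nat \<Rightarrow> complex" where
  "weighted_residue w s n' = complex_of_real (\<phi> (real (M * n' + s) / real N)) * w (M * n' + s)"

lemma norm_weighted_residue_le:
  assumes "s < M" "n' < K"
  shows "cmod (weighted_residue w s n') \<le> cmod (w (M * n' + s))"
proof -
  have "real (M * n' + s) < real N" using residue_index_less[OF assms] by (simp only: of_nat_less_iff)
  then have "real (M * n' + s) / real N \<in> {0..1}" using K M by (auto simp: divide_le_eq_1)
  then have "\<bar>\<phi> (real (M * n' + s) / real N)\<bar> \<le> 1" using phi by auto
  then show ?thesis unfolding weighted_residue_def norm_mult by (simp add: mult_left_le_one_le)
qed

lemma sum_cutoff_sum_eq_kernel:
  assumes "active j"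
  shows "(\<Sum>n<N. e2pi (real n * real b / real M) * cutoff_sum chi K (real n / real N - real j / real K)
                   * (complex_of_real (\<phi> (real n / real N)) * w n))
       = (\<Sum>s<M. e2pi (real b * real s / real M) * (\<Sum>n'<K. kernel s n' j * weighted_residue w s n'))"
proof -
  have "(\<Sum>n<N. e2pi (real n * real b / real M) * cutoff_sum chi K (real n / real N - real j / real K)
                   * (complex_of_real (\<phi> (real n / real N)) * w n))
      = (\<Sum>s<M. \<Sum>n'<K. e2pi (real (M * n' + s) * real b / real M)
           * cutoff_sum chi K (real (M * n' + s) / real N - real j / real K)
           * (complex_of_real (\<phi> (real (M * n' + s) / real N)) * w (M * n' + s)))"
    by (rule sum_lessThan_mult_residues)
  also have "\<dots> = (\<Sum>s<M. \<Sum>n'<K. e2pi (real b * real s / real M) * (kernel s n' j * weighted_residue w s n'))"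
    using assms e2pi_residue_shift
    by (intro sum.cong refl) (auto simp: kernel_def weighted_residue_def mult.commute)
  also have "\<dots> = (\<Sum>s<M. e2pi (real b * real s / real M) * (\<Sum>n'<K. kernel s n' j * weighted_residue w s n'))"
    by (simp add: sum_distrib_left)
  finally show ?thesis .
qed

lemma norm_psi_inner_phi_le:
  assumes b: "b < M" and j: "j < K"
  shows "cmod (mult_op N \<psi> (baker_inner M K A chi (DFT_adj N (mult_op N \<phi> w))) (j + b * K))
         \<le> cmod norm_const * cmod (\<Sum>s<M. e2pi (real b * real s / real M) * (\<Sum>n'<K. kernel s n' j * weighted_residue w s n'))"
    (is "cmod ?T \<le> cmod norm_const * cmod ?X")
proof (cases "b \<in> A \<and> active j")
  case False
  then have "chi (real j / real K) = 0 \<or> \<psi> (real (j + b * K) / real N) = 0 \<or> b \<notin> A"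
    unfolding active_def by auto
  then have "?T = 0" unfolding psi_inner_phi_eq[OF K M j finite_A] by auto
  then show ?thesis by simp
next
  case True
  have "real (j + b * K) < real N" using block_index_less[OF j b] by (simp only: of_nat_less_iff)
  then have "real (j + b * K) / real N \<in> {0..1}" using K M by (auto simp: divide_le_eq_1)
  then have c1: "\<bar>\<psi> (real (j + b * K) / real N)\<bar> \<le> 1" using psi by auto
  have c2: "\<bar>chi (real j / real K)\<bar> \<le> 1" using ch unfolding cutoff_def by (simp add: abs_le_iff)
  have "cmod ?T = \<bar>\<psi> (real (j + b * K) / real N)\<bar> * \<bar>chi (real j / real K)\<bar> * (cmod norm_const * cmod ?X)"
  proof -
    let ?c1 = "complex_of_real (1 / sqrt (real N))" and ?c2 = "complex_of_real (1 / sqrt (real K))"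
    have T: "?T = complex_of_real (\<psi> (real (j + b * K) / real N)) * complex_of_real (chi (real j / real K))
               * (?c2 * ?c1 * ?X)"
      using True unfolding psi_inner_phi_eq[OF K M j finite_A] sum_cutoff_sum_eq_kernel[OF conjunct2[OF True]]
      by (simp only: if_True)
    have c: "cmod (?c2 * ?c1) = cmod norm_const" unfolding norm_const_def by (simp only: mult.commute)
    show ?thesis unfolding T norm_mult norm_of_real c[symmetric] ..
  qed
  also have "\<dots> \<le> 1 * 1 * (cmod norm_const * cmod ?X)"
    by (intro mult_right_mono mult_mono c1 c2) auto
  finally show ?thesis by simp
qed

lemma sum_sq_psi_inner_phi_le: "(\<Sum>i<N. (cmod (mult_op N \<psi> (baker_inner M K A chi (DFT_adj N (mult_op N \<phi> w))) i))\<^sup>2) \<le> L\<^sup>2 * (\<Sum>n<N. (cmod (w n))\<^sup>2)"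
proof -
  let ?T = "mult_op N \<psi> (baker_inner M K A chi (DFT_adj N (mult_op N \<phi> w)))"
  let ?Z = "\<lambda>s j. \<Sum>n'<K. kernel s n' j * weighted_residue w s n'"
  have KL: "0 \<le> real K * L" using L_nonneg by simp
  have "(\<Sum>i<N. (cmod (?T i))\<^sup>2) = (\<Sum>b<M. \<Sum>j<K. (cmod (?T (j + b * K)))\<^sup>2)"
    by (rule sum_lessThan_mult_blocks)
  also have "\<dots> \<le> (\<Sum>b<M. \<Sum>j<K. (cmod norm_const)\<^sup>2 * (cmod (\<Sum>s<M. e2pi (real b * real s / real M) * ?Z s j))\<^sup>2)"
  proof (intro sum_mono)
    fix b j assume "b \<in> {..<M}" "j \<in> {..<K}"
    then have h: "cmod (?T (j + b * K)) \<le> cmod norm_const * cmod (\<Sum>s<M. e2pi (real b * real s / real M) * ?Z s j)"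
      using norm_psi_inner_phi_le by simp
    have "(cmod (?T (j + b * K)))\<^sup>2 \<le> (cmod norm_const * cmod (\<Sum>s<M. e2pi (real b * real s / real M) * ?Z s j))\<^sup>2"
      by (rule power_mono[OF h]) simp
    then show "(cmod (?T (j + b * K)))\<^sup>2 \<le> (cmod norm_const)\<^sup>2 * (cmod (\<Sum>s<M. e2pi (real b * real s / real M) * ?Z s j))\<^sup>2"
      by (simp only: power_mult_distrib)
  qed
  also have "\<dots> = (cmod norm_const)\<^sup>2 * (\<Sum>j<K. \<Sum>b<M. (cmod (\<Sum>s<M. e2pi (real b * real s / real M) * ?Z s j))\<^sup>2)"
    unfolding sum_distrib_left[symmetric] by (subst sum.swap) (rule refl)
  also have "\<dots> = (cmod norm_const)\<^sup>2 * (\<Sum>j<K. real M * (\<Sum>s<M. (cmod (?Z s j))\<^sup>2))"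
    by (simp only: parseval_e2pi[OF M])
  also have "\<dots> = (cmod norm_const)\<^sup>2 * real M * (\<Sum>s<M. \<Sum>j<K. (cmod (?Z s j))\<^sup>2)"
    unfolding sum_distrib_left[symmetric] mult.assoc by (subst sum.swap) (rule refl)
  also have "\<dots> \<le> (cmod norm_const)\<^sup>2 * real M * (\<Sum>s<M. (real K * L) * (real K * L) * (\<Sum>n'<K. (cmod (weighted_residue w s n'))\<^sup>2))"
  proof (intro mult_left_mono sum_mono)
    fix s assume "s \<in> {..<M}"
    then have s: "s < M" by simp
    show "(\<Sum>j<K. (cmod (?Z s j))\<^sup>2) \<le> real K * L * (real K * L) * (\<Sum>n'<K. (cmod (weighted_residue w s n'))\<^sup>2)"
      by (rule schur_test[OF kernel_col_sum_le[OF s] kernel_row_sum_le[OF s] KL])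
  qed simp
  also have "\<dots> \<le> (cmod norm_const)\<^sup>2 * real M * (\<Sum>s<M. (real K * L) * (real K * L) * (\<Sum>n'<K. (cmod (w (M * n' + s)))\<^sup>2))"
    using norm_weighted_residue_le KL by (intro mult_left_mono sum_mono power_mono) auto
  also have "(\<Sum>s<M. (real K * L) * (real K * L) * (\<Sum>n'<K. (cmod (w (M * n' + s)))\<^sup>2))
        = (real K * L) * (real K * L) * (\<Sum>n<N. (cmod (w n))\<^sup>2)"
    by (simp add: sum_distrib_left[symmetric] sum_lessThan_mult_residues)
  also have "(cmod norm_const)\<^sup>2 * real M * ((real K * L) * (real K * L) * (\<Sum>n<N. (cmod (w n))\<^sup>2))
           = ((cmod norm_const)\<^sup>2 * (real K * real K * real M)) * L\<^sup>2 * (\<Sum>n<N. (cmod (w n))\<^sup>2)"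
    by (simp add: power2_eq_square mult_ac)
  also have "\<dots> = L\<^sup>2 * (\<Sum>n<N. (cmod (w n))\<^sup>2)" by (simp add: norm_const_sq)
  finally show ?thesis .
qed

lemma opnorm_phi_baker_psi_le: "opnorm N (mult_op N \<phi> \<circ> baker M K A chi \<circ> mult_op N \<psi>) \<le> L"
  by (rule opnorm_le_if_sum_sq_le[OF L_nonneg]) (simp add: sum_sq_phi_baker_psi_le)

lemma opnorm_fourier_baker_le: "opnorm N (fourier_mult_op N \<psi> \<circ> baker M K A chi \<circ> fourier_mult_op N \<phi>) \<le> L"
proof (rule opnorm_le_if_sum_sq_le[OF L_nonneg])
  fix u
  have N1: "N \<ge> 1" using K M by simp
  have "(\<Sum>j<N. (cmod ((fourier_mult_op N \<psi> \<circ> baker M K A chi \<circ> fourier_mult_op N \<phi>) u j))\<^sup>2)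
      = (\<Sum>j<N. (cmod (mult_op N \<psi> (baker_inner M K A chi (DFT_adj N (mult_op N \<phi> (DFT N u)))) j))\<^sup>2)"
    by (rule sum_sq_fourier_baker_eq[OF K M])
  also have "\<dots> \<le> L\<^sup>2 * (\<Sum>n<N. (cmod (DFT N u n))\<^sup>2)" by (rule sum_sq_psi_inner_phi_le)
  also have "\<dots> = L\<^sup>2 * (\<Sum>n<N. (cmod (u n))\<^sup>2)" by (simp add: sum_sq_DFT[OF N1])
  finally show "(\<Sum>j<N. (cmod ((fourier_mult_op N \<psi> \<circ> baker M K A chi \<circ> fourier_mult_op N \<phi>) u j))\<^sup>2)
      \<le> L\<^sup>2 * (\<Sum>n<N. (cmod (u n))\<^sup>2)" .
qed

end

section \<open>The decay function\<close>

text \<open>Summing by parts p times bounds the cutoff sum at distance d by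
  K decay_const chi p / (K d)^p; two one-sided lattice sums of (k + \<theta>)^-p over
  k + \<theta> \<ge> R contribute the factor 2 (1 + R) / R^p.\<close>

definition decay_const :: "(real \<Rightarrow> real) \<Rightarrow> nat \<Rightarrow> real" where
  "decay_const chi p = (1 + real p) * deriv_bound chi p / 2 ^ p"

definition schur_bound :: "(real \<Rightarrow> real) \<Rightarrow> nat \<Rightarrow> real \<Rightarrow> real" where
  "schur_bound chi p R = 2 * decay_const chi p * ((1 + R) / R ^ p)"

text \<open>The bound for small N r, from the cases p = 0 and p = 2 and the lattice sums of
  min 1 t^-2, which are at most 3 on each side.\<close>

definition uniform_bound :: "(real \<Rightarrow> real) \<Rightarrow> real" where
  "uniform_bound chi = 6 * (deriv_bound chi 0 + deriv_bound chi 2)"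

lemma decay_const_nonneg: "cutoff chi \<Longrightarrow> 0 \<le> decay_const chi p"
  unfolding decay_const_def using deriv_bound_nonneg[of chi p] by simp

lemma norm_cutoff_sum_le:
  assumes ch: "cutoff chi" and K: "K \<ge> 1" and y: "y \<in> {0..1}" and u: "u \<in> {0..1}"
    and t: "0 < real K * circ_dist y u"
  shows "cmod (cutoff_sum chi K (y - u)) \<le> real K * (decay_const chi p / (real K * circ_dist y u) ^ p)"
proof -
  let ?cd = "circ_dist y u"
  let ?t = "real K * ?cd"
  have Kp: "real K > 0" using K by simp
  have cdp: "?cd > 0" using t Kp by (simp add: zero_less_mult_iff)
  have "(2 * ?cd) ^ p \<le> cmod (1 - e2pi (y - u)) ^ p"
    by (rule power_mono[OF circ_dist_le_norm_one_minus_e2pi[OF y u]]) (use cdp in simp)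
  then have "(2 * ?cd) ^ p * cmod (cutoff_sum chi K (y - u)) \<le> cmod (1 - e2pi (y - u)) ^ p * cmod (cutoff_sum chi K (y - u))"
    by (rule mult_right_mono) simp
  also have "\<dots> \<le> real (K + p) * (1 / real K) ^ p * deriv_bound chi p" by (rule norm_one_minus_e2pi_pow_cutoff_sum_le[OF ch K])
  finally have h: "(2 * ?cd) ^ p * cmod (cutoff_sum chi K (y - u)) \<le> real (K + p) * (1 / real K) ^ p * deriv_bound chi p" .
  have "(2 * ?t) ^ p * cmod (cutoff_sum chi K (y - u)) = real K ^ p * ((2 * ?cd) ^ p * cmod (cutoff_sum chi K (y - u)))"
    by (simp add: power_mult_distrib mult_ac)
  also have "\<dots> \<le> real K ^ p * (real (K + p) * (1 / real K) ^ p * deriv_bound chi p)"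
    by (rule mult_left_mono[OF h]) simp
  also have "\<dots> = real (K + p) * deriv_bound chi p" using Kp by (simp add: power_one_over)
  also have "\<dots> \<le> real K * (1 + real p) * deriv_bound chi p"
  proof (rule mult_right_mono)
    have "1 * real p \<le> real K * real p" by (rule mult_right_mono) (use K in auto)
    then show "real (K + p) \<le> real K * (1 + real p)" by (simp add: algebra_simps)
  qed (rule deriv_bound_nonneg[OF ch])
  finally have h2: "(2 * ?t) ^ p * cmod (cutoff_sum chi K (y - u)) \<le> real K * (1 + real p) * deriv_bound chi p" .
  have tp: "(2 * ?t) ^ p > 0" using t by simp
  have "cmod (cutoff_sum chi K (y - u)) \<le> real K * (1 + real p) * deriv_bound chi p / (2 * ?t) ^ p"
    using h2 tp by (simp add: le_divide_eq mult.commute)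
  also have "\<dots> = real K * (decay_const chi p / ?t ^ p)"
    by (simp add: decay_const_def power_mult_distrib)
  finally show ?thesis .
qed

lemma norm_cutoff_sum_le_min:
  assumes ch: "cutoff chi" and K: "K \<ge> 1" and y: "y \<in> {0..1}" and u: "u \<in> {0..1}"
    and t: "0 < real K * circ_dist y u"
  shows "cmod (cutoff_sum chi K (y - u)) \<le> real K * ((deriv_bound chi 0 + deriv_bound chi 2) * min 1 (1 / (real K * circ_dist y u) ^ 2))"
proof -
  let ?t = "real K * circ_dist y u"
  have b0: "cmod (cutoff_sum chi K (y - u)) \<le> real K * deriv_bound chi 0"
    using norm_cutoff_sum_le[OF ch K y u t, of 0] by (simp add: decay_const_def)
  have b2: "cmod (cutoff_sum chi K (y - u)) \<le> real K * (3 / 4 * deriv_bound chi 2 / ?t ^ 2)"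
    using norm_cutoff_sum_le[OF ch K y u t, of 2] by (simp add: decay_const_def)
  have B0: "0 \<le> deriv_bound chi 0" and B2: "0 \<le> deriv_bound chi 2" using deriv_bound_nonneg[OF ch] by auto
  show ?thesis
  proof (cases "?t \<le> 1")
    case True
    then have "?t ^ 2 \<le> 1" using t by (simp add: power_le_one)
    moreover have "0 < ?t ^ 2" using t by (rule zero_less_power)
    ultimately have "1 \<le> 1 / ?t ^ 2" by (simp only: le_divide_eq_1_pos)
    then have "min 1 (1 / ?t ^ 2) = 1" by simp
    moreover have "real K * deriv_bound chi 0 \<le> real K * (deriv_bound chi 0 + deriv_bound chi 2)" using B2 by (intro mult_left_mono) auto
    ultimately show ?thesis using b0 by simp
  next
    case False
    then have "1 \<le> ?t ^ 2" by (simp add: one_le_power)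
    then have "1 / ?t ^ 2 \<le> 1" by (rule divide_le_eq_1_pos[THEN iffD2, rotated]) (use t in \<open>rule zero_less_power\<close>)
    then have m: "min 1 (1 / ?t ^ 2) = 1 / ?t ^ 2" by simp
    have "3 / 4 * deriv_bound chi 2 \<le> deriv_bound chi 0 + deriv_bound chi 2" using B0 B2 by linarith
    then have "3 / 4 * deriv_bound chi 2 / ?t ^ 2 \<le> (deriv_bound chi 0 + deriv_bound chi 2) / ?t ^ 2" by (rule divide_right_mono) simp
    then have "3 / 4 * deriv_bound chi 2 / ?t ^ 2 \<le> (deriv_bound chi 0 + deriv_bound chi 2) * (1 / ?t ^ 2)" by simp
    then show ?thesis unfolding m using b2 K by (meson mult_left_mono of_nat_0_le_iff order_trans)
  qed
qed

context separated_baker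
begin

lemma opnorms_le_schur_bound:
  assumes p: "p \<ge> 2"
  shows "opnorm N (mult_op N \<phi> \<circ> baker M K A chi \<circ> mult_op N \<psi>) \<le> schur_bound chi p (real N * r / 2)
       \<and> opnorm N (fourier_mult_op N \<psi> \<circ> baker M K A chi \<circ> fourier_mult_op N \<phi>) \<le> schur_bound chi p (real N * r / 2)"
proof -
  define R where "R = real N * r / 2"
  have Rp: "R > 0" using K M r by (simp add: R_def)
  interpret baker_decay_profile M K A \<phi> \<psi> chi r "\<lambda>x. decay_const chi p * inv_pow_above R p x" "schur_bound chi p R"
  proof (intro baker_decay_profile.intro separated_baker_axioms baker_decay_profile_axioms.intro)
    show "0 \<le> decay_const chi p * inv_pow_above R p x" for x
      using Rp decay_const_nonneg[OF ch] inv_pow_above_nonneg by simp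
    show "cmod (cutoff_sum chi K (y - u)) \<le> real K * (decay_const chi p * inv_pow_above R p (real K * circ_dist y u))"
      if "y \<in> {0..1}" "u \<in> {0..1}" "real N * r / 2 \<le> real K * circ_dist y u" for y u
      using norm_cutoff_sum_le[OF ch K that(1,2), of p] that(3) Rp
      by (simp add: R_def inv_pow_above_def)
    show "(\<Sum>k<K. decay_const chi p * inv_pow_above R p (min (real k + \<theta>) (real K - real k - \<theta>)))
          \<le> schur_bound chi p R" if th: "0 \<le> \<theta>" "\<theta> < 1" for \<theta>
    proof -
      have "(\<Sum>k<K. inv_pow_above R p (min (real k + \<theta>) (real K - real k - \<theta>)))
          \<le> (\<Sum>k<K. inv_pow_above R p (real k + \<theta>)) + (\<Sum>k<K. inv_pow_above R p (real k + (1 - \<theta>)))"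
        using Rp by (intro sum_two_sided_le inv_pow_above_nonneg) simp
      also have "\<dots> \<le> (1 + R) / R ^ p + (1 + R) / R ^ p"
        by (intro add_mono sum_inv_pow_above_lattice_le) (use Rp p th in auto)
      finally have "(\<Sum>k<K. inv_pow_above R p (min (real k + \<theta>) (real K - real k - \<theta>)))
          \<le> 2 * ((1 + R) / R ^ p)" by simp
      then have "decay_const chi p * (\<Sum>k<K. inv_pow_above R p (min (real k + \<theta>) (real K - real k - \<theta>)))
          \<le> decay_const chi p * (2 * ((1 + R) / R ^ p))"
        by (rule mult_left_mono[OF _ decay_const_nonneg[OF ch]])
      also have "\<dots> = schur_bound chi p R" by (simp add: schur_bound_def)
      finally show ?thesis by (simp add: sum_distrib_left)
    qed
  qed
  show ?thesis using opnorm_phi_baker_psi_le opnorm_fourier_baker_le by (simp add: R_def)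
qed

lemma opnorms_le_uniform_bound:
  "opnorm N (mult_op N \<phi> \<circ> baker M K A chi \<circ> mult_op N \<psi>) \<le> uniform_bound chi
 \<and> opnorm N (fourier_mult_op N \<psi> \<circ> baker M K A chi \<circ> fourier_mult_op N \<phi>) \<le> uniform_bound chi"
proof -
  define B where "B = deriv_bound chi 0 + deriv_bound chi 2"
  have B: "0 \<le> B" using deriv_bound_nonneg[OF ch] by (simp add: B_def)
  interpret baker_decay_profile M K A \<phi> \<psi> chi r "\<lambda>x. B * min 1 (1 / x ^ 2)" "uniform_bound chi"
  proof (intro baker_decay_profile.intro separated_baker_axioms baker_decay_profile_axioms.intro)
    show "0 \<le> B * min 1 (1 / x ^ 2)" for x using B by simp
    show "cmod (cutoff_sum chi K (y - u)) \<le> real K * (B * min 1 (1 / (real K * circ_dist y u) ^ 2))"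
      if "y \<in> {0..1}" "u \<in> {0..1}" "real N * r / 2 \<le> real K * circ_dist y u" for y u
    proof -
      have "0 < real N * r / 2" using K M r by simp
      with that(3) have "0 < real K * circ_dist y u" by linarith
      then show ?thesis unfolding B_def by (rule norm_cutoff_sum_le_min[OF ch K that(1,2)])
    qed
    show "(\<Sum>k<K. B * min 1 (1 / (min (real k + \<theta>) (real K - real k - \<theta>)) ^ 2)) \<le> uniform_bound chi"
      if th: "0 \<le> \<theta>" "\<theta> < 1" for \<theta>
    proof -
      have "(\<Sum>k<K. min 1 (1 / (min (real k + \<theta>) (real K - real k - \<theta>)) ^ 2))
          \<le> (\<Sum>k<K. min 1 (1 / (real k + \<theta>) ^ 2)) + (\<Sum>k<K. min 1 (1 / (real k + (1 - \<theta>)) ^ 2))"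
        by (rule sum_two_sided_le[where H = "\<lambda>x. min 1 (1 / x ^ 2)"]) simp
      also have "\<dots> \<le> 6" using sum_min_inv_sq_lattice_le[of \<theta> K] sum_min_inv_sq_lattice_le[of "1 - \<theta>" K] th
        by simp
      finally have "(\<Sum>k<K. min 1 (1 / (min (real k + \<theta>) (real K - real k - \<theta>)) ^ 2)) \<le> 6" .
      from mult_left_mono[OF this B] show ?thesis
        by (simp add: uniform_bound_def B_def sum_distrib_left[symmetric] mult.commute)
    qed
  qed
  show ?thesis using opnorm_phi_baker_psi_le opnorm_fourier_baker_le by simp
qed

end

text \<open>The argument x stands for N r, so x / 2 is the separation scale of the kernel.\<close>

definition decay_fun :: "(real \<Rightarrow> real) \<Rightarrow> real \<Rightarrow> real" where
  "decay_fun chi x = min (uniform_bound chi) (Inf ((\<lambda>p. schur_bound chi p (x / 2)) ` {2..}))"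

lemma schur_bound_nonneg: "cutoff chi \<Longrightarrow> R > 0 \<Longrightarrow> 0 \<le> schur_bound chi p R"
  unfolding schur_bound_def using decay_const_nonneg[of chi p] by simp

lemma uniform_bound_nonneg: "cutoff chi \<Longrightarrow> 0 \<le> uniform_bound chi"
  unfolding uniform_bound_def using deriv_bound_nonneg[of chi 0] deriv_bound_nonneg[of chi 2] by simp

lemma decay_fun_bounds:
  assumes ch: "cutoff chi" and x: "x > 0"
  shows "0 \<le> decay_fun chi x" "decay_fun chi x \<le> uniform_bound chi" "\<And>p. p \<ge> 2 \<Longrightarrow> decay_fun chi x \<le> schur_bound chi p (x / 2)"
    and "\<And>v. v \<le> uniform_bound chi \<Longrightarrow> (\<And>p. p \<ge> 2 \<Longrightarrow> v \<le> schur_bound chi p (x / 2)) \<Longrightarrow> v \<le> decay_fun chi x"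
proof -
  let ?S = "(\<lambda>p. schur_bound chi p (x / 2)) ` {2..}"
  have ne: "?S \<noteq> {}" by auto
  have nn: "\<And>y. y \<in> ?S \<Longrightarrow> 0 \<le> y" using schur_bound_nonneg[OF ch] x by auto
  have bdd: "bdd_below ?S" using nn by (intro bdd_belowI[of _ 0]) auto
  show "0 \<le> decay_fun chi x" unfolding decay_fun_def using uniform_bound_nonneg[OF ch] cInf_greatest[OF ne nn] by simp
  show "decay_fun chi x \<le> uniform_bound chi" unfolding decay_fun_def by simp
  show "decay_fun chi x \<le> schur_bound chi p (x / 2)" if "p \<ge> 2" for p
  proof -
    have "Inf ?S \<le> schur_bound chi p (x / 2)" by (rule cInf_lower[OF _ bdd]) (use that in auto)
    then show ?thesis unfolding decay_fun_def by simp
  qed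
  show "v \<le> decay_fun chi x" if "v \<le> uniform_bound chi" "\<And>p. p \<ge> 2 \<Longrightarrow> v \<le> schur_bound chi p (x / 2)" for v
  proof -
    have "v \<le> Inf ?S" by (rule cInf_greatest[OF ne]) (use that in auto)
    then show ?thesis unfolding decay_fun_def using that(1) by simp
  qed
qed

lemma one_plus_div_power_le: "R \<ge> 1 \<Longrightarrow> (1 + R) / R ^ (n + 1) \<le> 2 / R ^ n"
  for R :: real
  by (simp add: divide_simps)

lemma decay_fun_poly_decay:
  assumes ch: "cutoff chi"
  shows "\<exists>C>0. \<forall>x>0. decay_fun chi x \<le> C * x powr (- real n)"
proof -
  define c where "c = decay_const chi (n + 2)"
  have c: "0 \<le> c" using decay_const_nonneg[OF ch] by (simp add: c_def)
  define C where "C = 2 ^ n * (4 * c + uniform_bound chi) + 1"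
  have "0 \<le> 2 ^ n * (4 * c)" "0 \<le> 2 ^ n * uniform_bound chi" using c uniform_bound_nonneg[OF ch] by simp_all
  then have C: "2 ^ n * (4 * c) \<le> C" "2 ^ n * uniform_bound chi \<le> C" "C > 0"
    unfolding C_def distrib_left by linarith+
  have "decay_fun chi x \<le> C * (1 / x ^ n)" if x: "x > 0" for x
  proof (cases "x / 2 \<ge> 1")
    case True
    define R where "R = x / 2"
    have R: "R \<ge> 1" using True by (simp add: R_def)
    have "(1 + R) / R ^ (n + 2) \<le> 2 / R ^ (n + 1)" using one_plus_div_power_le[OF R, of "Suc n"] by simp
    also have "\<dots> \<le> 2 / R ^ n" using R by (simp add: divide_left_mono)
    finally have "(1 + R) / R ^ (n + 2) \<le> 2 / R ^ n" .
    have "decay_fun chi x \<le> schur_bound chi (n + 2) R"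
      using decay_fun_bounds(3)[OF ch x, of "n + 2"] by (simp add: R_def)
    also have "\<dots> = 2 * c * ((1 + R) / R ^ (n + 2))" by (simp add: schur_bound_def c_def)
    also have "\<dots> \<le> 2 * c * (2 / R ^ n)"
      using \<open>(1 + R) / R ^ (n + 2) \<le> 2 / R ^ n\<close> c by (intro mult_left_mono) auto
    also have "\<dots> = 2 ^ n * (4 * c) * (1 / x ^ n)" by (simp add: R_def power_divide)
    also have "\<dots> \<le> C * (1 / x ^ n)" using C x by (intro mult_right_mono) auto
    finally show ?thesis .
  next
    case False
    then have "x ^ n \<le> 2 ^ n" using x by (intro power_mono) auto
    then have one: "1 \<le> 2 ^ n * (1 / x ^ n)" using x by (simp add: field_simps)
    have "decay_fun chi x \<le> uniform_bound chi * (2 ^ n * (1 / x ^ n))"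
      using decay_fun_bounds(2)[OF ch x] mult_left_mono[OF one uniform_bound_nonneg[OF ch]] by simp
    also have "\<dots> = 2 ^ n * uniform_bound chi * (1 / x ^ n)" by simp
    also have "\<dots> \<le> C * (1 / x ^ n)" using C x by (intro mult_right_mono) auto
    finally show ?thesis .
  qed
  moreover have "x powr (- real n) = 1 / x ^ n" if "x > 0" for x
    using that by (simp add: powr_minus powr_realpow divide_inverse)
  ultimately show ?thesis using C(3) by auto
qed

lemma deriv_bound_gevrey:
  assumes ch: "cutoff chi" and g: "gevrey_c s chi"
  shows "\<exists>C1\<ge>1. \<forall>p. deriv_bound chi p \<le> C1 ^ (p + 1) * fact p powr s"
proof -
  obtain C0 where C0: "\<forall>\<alpha>::nat. \<forall>x\<in>{0..1::real}. \<bar>(deriv ^^ \<alpha>) chi x\<bar> \<le> C0 ^ (\<alpha> + 1) * fact \<alpha> powr s"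
    using g unfolding gevrey_c_def by (meson compact_Icc)
  define C1 where "C1 = max \<bar>C0\<bar> 1"
  have C1: "C1 \<ge> 1" by (simp add: C1_def)
  have "deriv_bound chi p \<le> C1 ^ (p + 1) * fact p powr s" for p
    unfolding deriv_bound_def
  proof (rule cSup_least)
    show "(\<lambda>x. \<bar>(deriv ^^ p) chi x\<bar>) ` {0..1} \<noteq> {}" by simp
  next
    fix z assume "z \<in> (\<lambda>x. \<bar>(deriv ^^ p) chi x\<bar>) ` {0..1}"
    then obtain x where x: "x \<in> {0..1}" "z = \<bar>(deriv ^^ p) chi x\<bar>" by auto
    have "z \<le> C0 ^ (p + 1) * fact p powr s" using C0 x by auto
    also have "\<dots> \<le> C1 ^ (p + 1) * fact p powr s"
    proof (rule mult_right_mono)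
      have "C0 ^ (p + 1) \<le> \<bar>C0\<bar> ^ (p + 1)" by (metis abs_ge_self power_abs)
      also have "\<dots> \<le> C1 ^ (p + 1)" by (intro power_mono) (auto simp: C1_def)
      finally show "C0 ^ (p + 1) \<le> C1 ^ (p + 1)" .
    qed simp
    finally show "z \<le> C1 ^ (p + 1) * fact p powr s" .
  qed
  then show ?thesis using C1 by blast
qed

lemma add_3_le_3_pow: "q + 3 \<le> (3::nat) ^ (q + 1)"
  by (induction q) auto

lemma fact_Suc_powr_le:
  assumes q: "q \<ge> 1" and s: "s \<ge> 0"
  shows "fact (q + 1) powr s \<le> (2 powr s) ^ q * (real q powr s) ^ q"
proof -
  have "fact (q + 1) = real (Suc q) * fact q" by simp
  also have "\<dots> \<le> 2 ^ q * real (q ^ q)"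
  proof (rule mult_mono)
    have "Suc q \<le> 2 ^ q" using less_exp[of q] by (simp add: Suc_le_eq)
    then show "real (Suc q) \<le> 2 ^ q" by (metis of_nat_le_iff of_nat_numeral of_nat_power)
    show "fact q \<le> real (q ^ q)" by (rule fact_le_power)
  qed auto
  finally have "fact (q + 1) powr s \<le> ((2::real) ^ q * real q ^ q) powr s"
    by (intro powr_mono2[OF s]) simp_all
  also have "\<dots> = (2 powr s) ^ q * (real q powr s) ^ q"
    using q by (simp add: powr_mult powr_realpow[symmetric] powr_powr mult.commute)
  finally show ?thesis .
qed

lemma schur_bound_gevrey_le:
  assumes ch: "cutoff chi" and C1: "C1 \<ge> 1" and s: "s \<ge> 0"
    and B: "\<forall>p. deriv_bound chi p \<le> C1 ^ (p + 1) * fact p powr s"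
    and q: "q \<ge> 1" and R: "R \<ge> 1"
  shows "schur_bound chi (q + 1) R \<le> 2 * C1\<^sup>2 * (3 * C1 * 2 powr s / 2 * real q powr s / R) ^ q"
proof -
  have Rp: "R > 0" using R by simp
  have three: "1 + real (q + 1) \<le> 3 ^ q"
  proof -
    obtain q' where q': "q = q' + 1" using q by (metis add.commute le_Suc_ex)
    have "real (q' + 3) \<le> 3 ^ (q' + 1)"
      using add_3_le_3_pow[of q'] by (metis of_nat_le_iff of_nat_numeral of_nat_power)
    then show ?thesis by (simp add: q')
  qed
  have Bq: "deriv_bound chi (q + 1) \<le> C1 ^ (q + 2) * ((2 powr s) ^ q * (real q powr s) ^ q)"
  proof -
    have "deriv_bound chi (q + 1) \<le> C1 ^ (q + 2) * fact (q + 1) powr s" using B[rule_format, of "q + 1"] by simp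
    also have "\<dots> \<le> C1 ^ (q + 2) * ((2 powr s) ^ q * (real q powr s) ^ q)"
      by (rule mult_left_mono[OF fact_Suc_powr_le[OF q s]]) (use C1 in simp)
    finally show ?thesis .
  qed
  have "schur_bound chi (q + 1) R
      = 2 * ((1 + real (q + 1)) * deriv_bound chi (q + 1) / 2 ^ (q + 1)) * ((1 + R) / R ^ (q + 1))"
    by (simp add: schur_bound_def decay_const_def)
  also have "\<dots> \<le> 2 * (3 ^ q * (C1 ^ (q + 2) * ((2 powr s) ^ q * (real q powr s) ^ q)) / 2 ^ (q + 1)) * (2 / R ^ q)"
    using deriv_bound_nonneg[OF ch, of "q + 1"] Rp C1
    by (intro mult_mono mult_left_mono divide_right_mono three Bq one_plus_div_power_le R) auto
  also have "\<dots> = 2 * C1\<^sup>2 * (3 * C1 * 2 powr s / 2 * real q powr s / R) ^ q"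
    using Rp by (simp add: power_mult_distrib power_divide power_add field_simps power2_eq_square)
  finally show ?thesis .
qed

lemma decay_fun_le_half_pow:
  assumes ch: "cutoff chi" and C1: "C1 \<ge> 1" and s: "s \<ge> 0"
    and B: "\<forall>p. deriv_bound chi p \<le> C1 ^ (p + 1) * fact p powr s"
    and q: "q \<ge> 1" and x: "x > 0" and qx: "3 * C1 * 2 powr s / 2 * real q powr s \<le> x / 4"
  shows "decay_fun chi x \<le> 2 * C1\<^sup>2 * (1 / 2) ^ q"
proof -
  define D where "D = 3 * C1 * 2 powr s / 2"
  have "3 * 1 * 1 \<le> 3 * C1 * 2 powr s" using C1 s by (intro mult_mono) (auto simp: ge_one_powr_ge_zero)
  then have D: "D \<ge> 3 / 2" by (simp add: D_def)
  have "1 \<le> real q powr s" using q s by (simp add: ge_one_powr_ge_zero)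
  then have "D \<le> D * real q powr s" using D by simp
  then have R: "x / 2 \<ge> 1" using D qx unfolding D_def by linarith
  have ratio: "D * real q powr s / (x / 2) \<le> 1 / 2" using qx x by (simp add: D_def divide_simps)
  have "decay_fun chi x \<le> schur_bound chi (q + 1) (x / 2)"
    using decay_fun_bounds(3)[OF ch x, of "q + 1"] q by simp
  also have "\<dots> \<le> 2 * C1\<^sup>2 * (D * real q powr s / (x / 2)) ^ q"
    unfolding D_def by (rule schur_bound_gevrey_le[OF ch C1 s B q R])
  also have "\<dots> \<le> 2 * C1\<^sup>2 * (1 / 2) ^ q"
    using x D by (intro mult_left_mono power_mono ratio) auto
  finally show ?thesis .
qed

lemma half_pow_le_exp:
  assumes "y < real q + 1"
  shows "(1 / 2 :: real) ^ q \<le> 2 * exp (- (ln 2 * y))"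
proof -
  have "(1 / 2 :: real) ^ q = exp (- (real q * ln 2))"
    by (simp add: exp_minus exp_of_nat_mult power_one_over inverse_eq_divide)
  also have "\<dots> \<le> exp (ln 2 - ln 2 * y)"
    using mult_left_mono[OF less_imp_le[OF assms], of "ln 2"] by (simp add: algebra_simps)
  also have "\<dots> = 2 * exp (- (ln 2 * y))" by (simp add: exp_diff exp_minus divide_inverse)
  finally show ?thesis .
qed

text \<open>Gevrey bounds on the derivatives of \<chi> make schur_bound chi (q + 1) (x / 2) decay
  geometrically in q as long as q^s is a small multiple of x; choosing q \<approx> x^(1/s) gives
  the stretched exponential.\<close>

lemma decay_fun_gevrey_decay:
  assumes ch: "cutoff chi" and s1: "s > 1" and g: "gevrey_c s chi"
  shows "\<exists>C>0. \<exists>c>0. \<forall>x>0. decay_fun chi x \<le> C * exp (- c * x powr (1 / s))"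
proof -
  obtain C1 where C1: "C1 \<ge> 1" and B: "\<forall>p. deriv_bound chi p \<le> C1 ^ (p + 1) * fact p powr s"
    using deriv_bound_gevrey[OF ch g] by blast
  have s: "s > 0" using s1 by simp
  define D where "D = 3 * C1 * 2 powr s / 2"
  have D: "D > 0" using C1 by (simp add: D_def)
  define c where "c = ln 2 * (4 * D) powr (- 1 / s)"
  define C0 where "C0 = uniform_bound chi + 2 * C1\<^sup>2"
  have C0: "C0 > 0" using uniform_bound_nonneg[OF ch] C1 by (simp add: C0_def add_nonneg_pos)
  have "decay_fun chi x \<le> 2 * C0 * exp (- c * x powr (1 / s))" if x: "x > 0" for x
  proof -
    define y where "y = (x / (4 * D)) powr (1 / s)"
    define q where "q = nat \<lfloor>y\<rfloor>"
    have qy: "real q \<le> y" "y < real q + 1" by (auto simp: q_def y_def)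
    have cy: "c * x powr (1 / s) = ln 2 * y"
    proof -
      have "y = x powr (1 / s) / (4 * D) powr (1 / s)" using D x by (simp add: y_def powr_divide)
      also have "\<dots> = x powr (1 / s) * (4 * D) powr (- 1 / s)" by (simp add: powr_minus divide_inverse)
      finally show ?thesis by (simp add: c_def mult_ac)
    qed
    have "decay_fun chi x \<le> C0 * (1 / 2) ^ q"
    proof (cases "q \<ge> 1")
      case True
      have "real q powr s \<le> y powr s" by (rule powr_mono2) (use s qy in auto)
      also have "y powr s = x / (4 * D)" using x D s by (simp add: y_def powr_powr)
      finally have "D * real q powr s \<le> x / 4" using D by (simp add: field_simps)
      then have "decay_fun chi x \<le> 2 * C1\<^sup>2 * (1 / 2) ^ q"
        unfolding D_def by (intro decay_fun_le_half_pow[OF ch C1 _ B True x]) (use s in auto)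
      moreover have "0 \<le> uniform_bound chi * (1 / 2) ^ q" using uniform_bound_nonneg[OF ch] by simp
      ultimately show ?thesis by (simp add: C0_def distrib_right)
    next
      case False
      then have "q = 0" by simp
      then show ?thesis using decay_fun_bounds(2)[OF ch x] by (simp add: C0_def add_increasing2)
    qed
    also have "\<dots> \<le> C0 * (2 * exp (- (ln 2 * y)))"
      using C0 by (intro mult_left_mono half_pow_le_exp qy) auto
    finally show ?thesis using cy by (simp add: mult_ac)
  qed
  moreover have "c > 0" using D by (simp add: c_def)
  ultimately show ?thesis using C0 by (intro exI[of _ "2 * C0"] exI[of _ c]) auto
qed

lemma (in separated_baker) opnorms_le_decay_fun:
  "opnorm N (mult_op N \<phi> \<circ> baker M K A chi \<circ> mult_op N \<psi>) \<le> decay_fun chi (real N * r)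
 \<and> opnorm N (fourier_mult_op N \<psi> \<circ> baker M K A chi \<circ> fourier_mult_op N \<phi>) \<le> decay_fun chi (real N * r)"
proof -
  have x: "real N * r > 0" using K M r by simp
  show ?thesis
    using opnorms_le_uniform_bound opnorms_le_schur_bound
    by (intro conjI decay_fun_bounds(4)[OF ch x]) auto
qed

theorem proposition1:
  fixes chi :: "real \<Rightarrow> real"
  assumes "cutoff chi"
  shows "\<exists>g :: real \<Rightarrow> real.
     (\<forall>x>0. 0 \<le> g x) \<and>
     (\<forall>n::nat. \<exists>C>0. \<forall>x>0. g x \<le> C * x powr (- real n)) \<and>
     (\<forall>s>1. gevrey_c s chi \<longrightarrow> (\<exists>C>0. \<exists>c>0. \<forall>x>0. g x \<le> C * exp (- c * x powr (1 / s)))) \<and>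
     (\<forall>(M::nat) (K::nat) (A::nat set) (\<phi>::real \<Rightarrow> real) (\<psi>::real \<Rightarrow> real) (r::real).
        M \<ge> 1 \<longrightarrow> K \<ge> 1 \<longrightarrow> A \<subseteq> {0..<M} \<longrightarrow>
        (\<forall>x\<in>{0..1}. 0 \<le> \<phi> x \<and> \<phi> x \<le> 1) \<longrightarrow>
        (\<forall>x\<in>{0..1}. 0 \<le> \<psi> x \<and> \<psi> x \<le> 1) \<longrightarrow>
        0 < r \<longrightarrow> ereal (real M * r) \<le> 2 * circ_setdist (supp chi) {0} \<longrightarrow>
        circ_setdist (supp01 \<psi>) (Phi_preimage M A (supp01 \<phi>)) \<ge> ereal r \<longrightarrow>
        opnorm (K * M) (mult_op (K * M) \<phi> \<circ> baker M K A chi \<circ> mult_op (K * M) \<psi>)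
          \<le> g (real (K * M) * r) \<and>
        opnorm (K * M) (fourier_mult_op (K * M) \<psi> \<circ> baker M K A chi \<circ> fourier_mult_op (K * M) \<phi>)
          \<le> g (real (K * M) * r))"
proof (intro exI[of _ "decay_fun chi"] conjI allI impI)
  fix M K :: nat and A \<phi> \<psi> and r :: real
  assume "M \<ge> 1" "K \<ge> 1" "A \<subseteq> {0..<M}" "\<forall>x\<in>{0..1}. 0 \<le> \<phi> x \<and> \<phi> x \<le> 1"
    "\<forall>x\<in>{0..1}. 0 \<le> \<psi> x \<and> \<psi> x \<le> 1" "0 < r" "ereal (real M * r) \<le> 2 * circ_setdist (supp chi) {0}"
    "circ_setdist (supp01 \<psi>) (Phi_preimage M A (supp01 \<phi>)) \<ge> ereal r"
  then interpret separated_baker M K A \<phi> \<psi> chi r using assms by unfold_locales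
  show "opnorm (K * M) (mult_op (K * M) \<phi> \<circ> baker M K A chi \<circ> mult_op (K * M) \<psi>) \<le> decay_fun chi (real (K * M) * r)"
    "opnorm (K * M) (fourier_mult_op (K * M) \<psi> \<circ> baker M K A chi \<circ> fourier_mult_op (K * M) \<phi>)
       \<le> decay_fun chi (real (K * M) * r)"
    using opnorms_le_decay_fun by simp_all
qed (use decay_fun_bounds(1) decay_fun_poly_decay decay_fun_gevrey_decay assms in auto)

end
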